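(* For $\alpha\in H_R'$ let $\theta_\alpha:=\phi_{B_++\delta\alpha}\colon H_R\to H_R$. Then: (1) For every forest $w$, $\theta_\alpha(w)-w\in\bigoplus_{n=0}^{|w|-1}H_{R,n}$. (2) Each $\theta_\alpha$ is a Hopf algebra automorphism of $H_R$, with inverse $\theta_\alpha^{-1}=\theta_{-\alpha\circ\theta_\alpha}$, and for all $\alpha,\beta\in H_R'$, $\theta_\alpha\circ\theta_\beta=\theta_\gamma$ with $\gamma=\alpha+\beta\circ\theta_\alpha^{-1}$. (3) The maps $\delta\colon H_R'\to\operatorname{End}(H_R)$ and $\alpha\mapsto\theta_\alpha$ are injective. Hence $\alpha\bullet\beta:=\alpha+\beta\circ\theta_\alpha^{-1}$ defines a group structure on $H_R'$ with neutral element $0$ and inverse $\alpha^{\bullet-1}=-\alpha\circ\theta_\alpha$, such that $\alpha\mapsto\theta_\alpha$ is a group isomorphism onto its image in $\operatorname{Aut}_{\mathrm{Hopf}}(H_R)$.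
   Context: $H_R$ is the Connes–Kreimer Hopf algebra of rooted trees over a field $\mathbb K$ of characteristic zero: free commutative algebra on rooted trees, basis rooted forests, $H_{R,n}$ the span of forests with $n$ nodes, $|w|$ the number of nodes; $B_+$ grafts all trees of a forest onto a new root; coproduct with $\Delta\circ B_+=B_+\otimes\mathbb 1+(\mathrm{id}\otimes B_+)\circ\Delta$. $H_R'=\operatorname{Hom}(H_R,\mathbb K)$; for $\alpha\in H_R'$, $\delta\alpha:=(\mathrm{id}\otimes\alpha)\circ\Delta-\mathbb 1\cdot\alpha$. For $M\in\operatorname{End}(H_R)$, $\phi_M$ is the unique unital algebra morphism $H_R\to H_R$ with $\phi_M\circ B_+=M\circ\phi_M$. *)

theory Defs
  imports "HOL-Library.Multiset" "HOL-Library.Poly_Mapping" "HOL-Library.Product_Plus"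
          "HOL-Algebra.Group"
begin

text \<open>Rooted (non-planar) trees: a root together with the multiset of its subtrees.\<close>
datatype rtree = Node "rtree multiset"

type_synonym forest = "rtree multiset"

primrec tsize :: "rtree \<Rightarrow> nat" where
  "tsize (Node ts) = 1 + sum_mset (image_mset tsize ts)"

definition fsize :: "forest \<Rightarrow> nat" where
  "fsize w = sum_mset (image_mset tsize w)"

text \<open>H_R over the field 'k: finitely supported 'k-combinations of forests; the
  product is the convolution induced by disjoint union of forests (multiset sum),
  so this is the free commutative algebra on rooted trees with unit the empty forest.\<close>
type_synonym 'k H = "forest \<Rightarrow>\<^sub>0 'k"

text \<open>H_R tensor H_R, with basis pairs of forests (product: componentwise union).\<close>
type_synonym 'k HH = "(forest \<times> forest) \<Rightarrow>\<^sub>0 'k"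

definition fr :: "forest \<Rightarrow> 'k::zero_neq_one H" where
  "fr w = Poly_Mapping.single w 1"

definition linext :: "('a \<Rightarrow> ('b \<Rightarrow>\<^sub>0 'k::comm_ring_1)) \<Rightarrow> ('a \<Rightarrow>\<^sub>0 'k) \<Rightarrow> ('b \<Rightarrow>\<^sub>0 'k)" where
  "linext g h = (\<Sum>w\<in>Poly_Mapping.keys h. Poly_Mapping.map (\<lambda>c. Poly_Mapping.lookup h w * c) (g w))"

definition is_linear :: "(('a \<Rightarrow>\<^sub>0 'k::comm_ring_1) \<Rightarrow> ('b \<Rightarrow>\<^sub>0 'k)) \<Rightarrow> bool" where
  "is_linear f \<longleftrightarrow> (\<forall>x y. f (x + y) = f x + f y) \<and>
                   (\<forall>c x. f (Poly_Mapping.map (\<lambda>d. c * d) x) = Poly_Mapping.map (\<lambda>d. c * d) (f x))"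

definition tensor :: "'k::comm_ring_1 H \<Rightarrow> 'k H \<Rightarrow> 'k HH" where
  "tensor x y = (\<Sum>a\<in>Poly_Mapping.keys x. \<Sum>b\<in>Poly_Mapping.keys y. Poly_Mapping.single (a, b) (Poly_Mapping.lookup x a * Poly_Mapping.lookup y b))"

definition Bplus :: "'k::comm_ring_1 H \<Rightarrow> 'k H" where
  "Bplus = linext (\<lambda>w. fr {#Node w#})"

definition id_tensor_Bplus :: "'k::comm_ring_1 HH \<Rightarrow> 'k HH" where
  "id_tensor_Bplus = linext (\<lambda>(a, b). Poly_Mapping.single (a, {#Node b#}) 1)"

text \<open>Coproduct on trees, by the recursion
  Delta(B_+ w) = B_+ w \<otimes> 1 + (id \<otimes> B_+)(Delta w), Delta multiplicative.\<close>
primrec cop_tree :: "rtree \<Rightarrow> 'k::comm_ring_1 HH" where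
  "cop_tree (Node ts) =
     Poly_Mapping.single ({#Node ts#}, {#}) 1 + id_tensor_Bplus (prod_mset (image_mset cop_tree ts))"

definition cop_forest :: "forest \<Rightarrow> 'k::comm_ring_1 HH" where
  "cop_forest w = prod_mset (image_mset cop_tree w)"

definition Delta :: "'k::comm_ring_1 H \<Rightarrow> 'k HH" where
  "Delta = linext cop_forest"

definition counit :: "'k::comm_ring_1 H \<Rightarrow> 'k" where
  "counit h = Poly_Mapping.lookup h {#}"

definition tensor_map :: "('k::comm_ring_1 H \<Rightarrow> 'k H) \<Rightarrow> ('k H \<Rightarrow> 'k H) \<Rightarrow> 'k HH \<Rightarrow> 'k HH" where
  "tensor_map f g = linext (\<lambda>(a, b). tensor (f (fr a)) (g (fr b)))"

text \<open>A linear functional on H_R is determined by (and freely given by) its values on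
  the basis of forests; so H_R' = (forest \<Rightarrow> 'k).\<close>
type_synonym 'k dual = "forest \<Rightarrow> 'k"

definition dapply :: "'k::comm_ring_1 dual \<Rightarrow> 'k H \<Rightarrow> 'k" where
  "dapply \<alpha> h = (\<Sum>w\<in>Poly_Mapping.keys h. Poly_Mapping.lookup h w * \<alpha> w)"

definition dcomp :: "'k::comm_ring_1 dual \<Rightarrow> ('k H \<Rightarrow> 'k H) \<Rightarrow> 'k dual" where
  "dcomp \<alpha> f = (\<lambda>w. dapply \<alpha> (f (fr w)))"

definition id_tensor_dual :: "'k::comm_ring_1 dual \<Rightarrow> 'k HH \<Rightarrow> 'k H" where
  "id_tensor_dual \<alpha> = linext (\<lambda>(a, b). Poly_Mapping.single a (\<alpha> b))"

definition delta :: "'k::comm_ring_1 dual \<Rightarrow> 'k H \<Rightarrow> 'k H" where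
  "delta \<alpha> h = id_tensor_dual \<alpha> (Delta h) - Poly_Mapping.single {#} (dapply \<alpha> h)"

text \<open>phi_M: the unital algebra morphism with phi_M \<circ> B_+ = M \<circ> phi_M, defined
  recursively on trees, multiplicatively on forests, linearly on H_R.\<close>
primrec phi_tree :: "('k::comm_ring_1 H \<Rightarrow> 'k H) \<Rightarrow> rtree \<Rightarrow> 'k H" where
  "phi_tree M (Node ts) = M (prod_mset (image_mset (phi_tree M) ts))"

definition phi :: "('k::comm_ring_1 H \<Rightarrow> 'k H) \<Rightarrow> 'k H \<Rightarrow> 'k H" where
  "phi M = linext (\<lambda>w. prod_mset (image_mset (phi_tree M) w))"

definition theta :: "'k::comm_ring_1 dual \<Rightarrow> 'k H \<Rightarrow> 'k H" where
  "theta \<alpha> = phi (\<lambda>h. Bplus h + delta \<alpha> h)"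

text \<open>A Hopf algebra endomorphism is a linear, unital, multiplicative map compatible with
  coproduct and counit (compatibility with the antipode is then automatic).\<close>
definition hopf_endo :: "('k::comm_ring_1 H \<Rightarrow> 'k H) \<Rightarrow> bool" where
  "hopf_endo f \<longleftrightarrow> is_linear f \<and> f 1 = 1 \<and> (\<forall>x y. f (x * y) = f x * f y) \<and>
      (\<forall>x. Delta (f x) = tensor_map f f (Delta x)) \<and> (\<forall>x. counit (f x) = counit x)"

definition hopf_aut :: "('k::comm_ring_1 H \<Rightarrow> 'k H) \<Rightarrow> bool" where
  "hopf_aut f \<longleftrightarrow> hopf_endo f \<and> bij f"

definition AutHopf :: "('k::comm_ring_1 H \<Rightarrow> 'k H) monoid" where
  "AutHopf = \<lparr>carrier = {f. hopf_aut f}, monoid.mult = (\<circ>), one = id\<rparr>"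

definition bullet :: "'k::comm_ring_1 dual \<Rightarrow> 'k dual \<Rightarrow> 'k dual" where
  "bullet \<alpha> \<beta> = (\<lambda>w. \<alpha> w + dcomp \<beta> (inv_into UNIV (theta \<alpha>)) w)"

definition dual_group :: "'k::comm_ring_1 dual monoid" where
  "dual_group = \<lparr>carrier = UNIV, monoid.mult = bullet, one = (\<lambda>_. 0)\<rparr>"

end

theory Submission
  imports Defs
begin

text \<open>
  All objects live in free modules \<open>'a \<Rightarrow>\<^sub>0 'k\<close> with basis the
  singletons; a linear map is determined by its values on basis elements, and a unital
  multiplicative linear map on H_R is determined by its values on single trees.  Hence
  almost every identity below is proved by checking it on one tree \<open>Node ts\<close>, by
  structural induction on trees.
\<close>

section \<open>Linear maps between free modules\<close>

abbreviation lk :: "('a \<Rightarrow>\<^sub>0 'b::zero) \<Rightarrow> 'a \<Rightarrow> 'b" where "lk \<equiv> Poly_Mapping.lookup"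
abbreviation ks :: "('a \<Rightarrow>\<^sub>0 'b::zero) \<Rightarrow> 'a set" where "ks \<equiv> Poly_Mapping.keys"

abbreviation bas :: "'a \<Rightarrow> 'a \<Rightarrow>\<^sub>0 'k::zero_neq_one" where "bas a \<equiv> Poly_Mapping.single a 1"

lemma lookup_map_mult: "lk (Poly_Mapping.map ((*) c) x) k = (c::'k::semiring_0) * lk x k"
  by transfer (simp add: when_def)

lemma map_mult_conv: "Poly_Mapping.map ((*) c) x = Poly_Mapping.single 0 (c::'k::semiring_1) * (x :: 'a::monoid_add \<Rightarrow>\<^sub>0 'k)"
  by (rule mult_map_scale_conv_mult)

lemma lookup_single0_mult: "lk (Poly_Mapping.single 0 c * x) k = (c::'k::semiring_1) * lk (x::'a::monoid_add \<Rightarrow>\<^sub>0 'k) k"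
  by (metis lookup_map_mult map_mult_conv)

lemma map_mult_sum: "Poly_Mapping.map ((*) c) (sum f A) = (\<Sum>a\<in>A. Poly_Mapping.map ((*) (c::'k::semiring_0)) (f a))"
  by (rule poly_mapping_eqI) (simp add: lookup_map_mult lookup_sum sum_distrib_left)

lemma map_mult_add: "Poly_Mapping.map ((*) c) (x + y) = Poly_Mapping.map ((*) (c::'k::semiring_0)) x + Poly_Mapping.map ((*) c) y"
  by (rule poly_mapping_eqI) (simp add: lookup_map_mult lookup_add distrib_left)

lemma map_mult_distrib: "Poly_Mapping.map ((*) (c+d)) x = Poly_Mapping.map ((*) (c::'k::semiring_0)) x + Poly_Mapping.map ((*) d) x"
  by (rule poly_mapping_eqI) (simp add: lookup_map_mult lookup_add distrib_right)

lemma map_mult_mult: "Poly_Mapping.map ((*) c) (Poly_Mapping.map ((*) d) x) = Poly_Mapping.map ((*) (c*(d::'k::semiring_0))) x"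
  by (rule poly_mapping_eqI) (simp add: lookup_map_mult mult.assoc)



lemma map_mult_0 [simp]: "Poly_Mapping.map ((*) (0::'k::semiring_0)) x = 0"
  by (rule poly_mapping_eqI) (simp add: lookup_map_mult)

lemma map_mult_1 [simp]: "Poly_Mapping.map ((*) (1::'k::semiring_1)) x = x"
  by (rule poly_mapping_eqI) (simp add: lookup_map_mult)

lemma map_mult_zero [simp]: "Poly_Mapping.map ((*) (c::'k::semiring_0)) 0 = 0"
  by (rule poly_mapping_eqI) (simp add: lookup_map_mult)

lemma map_mult_single: "Poly_Mapping.map ((*) c) (Poly_Mapping.single a d) = Poly_Mapping.single a (c * (d::'k::semiring_0))"
  by (rule poly_mapping_eqI) (simp add: lookup_map_mult lookup_single when_def)

lemma map_mult_diff: "Poly_Mapping.map ((*) c) (x - y) = Poly_Mapping.map ((*) (c::'k::ring)) x - Poly_Mapping.map ((*) c) y"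
  by (rule poly_mapping_eqI) (simp add: lookup_map_mult lookup_minus right_diff_distrib)


lemma linext_0 [simp]: "linext g 0 = 0"
  by (simp add: linext_def)

lemma linext_single: "linext g (Poly_Mapping.single a c) = Poly_Mapping.map ((*) c) (g a)"
  by (cases "c = 0") (simp_all add: linext_def)

lemma linext_bas [simp]: "linext g (bas a) = g a"
  by (simp add: linext_single)

lemma linext_add: "linext g (x + y) = linext g x + linext g y"
proof -
  let ?t = "\<lambda>z i. Poly_Mapping.map ((*) (lk z i)) (g i)"
  have extend: "(\<Sum>i\<in>ks z. ?t z i) = (\<Sum>i\<in>ks x \<union> ks y. ?t z i)" if "ks z \<subseteq> ks x \<union> ks y" for z
    using that by (intro sum.mono_neutral_cong_left) (auto simp: in_keys_iff)
  have "linext g (x + y) = (\<Sum>i\<in>ks x \<union> ks y. ?t (x + y) i)"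
    unfolding linext_def by (rule extend) (rule keys_add)
  also have "\<dots> = (\<Sum>i\<in>ks x \<union> ks y. ?t x i + ?t y i)"
    by (simp add: lookup_add map_mult_distrib)
  also have "\<dots> = linext g x + linext g y"
    unfolding linext_def sum.distrib by (simp add: extend)
  finally show ?thesis .
qed

lemma linext_smul: "linext g (Poly_Mapping.map ((*) c) x) = Poly_Mapping.map ((*) c) (linext g x)"
proof -
  have "linext g (Poly_Mapping.map ((*) c) x) = (\<Sum>i\<in>ks x. Poly_Mapping.map ((*) (c * lk x i)) (g i))"
    unfolding linext_def
    by (rule sum.mono_neutral_cong_left) (auto simp: in_keys_iff lookup_map_mult)
  also have "\<dots> = Poly_Mapping.map ((*) c) (linext g x)"
    by (simp add: linext_def map_mult_sum map_mult_mult)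
  finally show ?thesis .
qed

lemma is_linear_linext: "is_linear (linext g)"
  unfolding is_linear_def by (simp add: linext_add linext_smul)

lemma linear_add: "is_linear f \<Longrightarrow> f (x + y) = f x + f y"
  by (simp add: is_linear_def)

lemma linear_smul: "is_linear f \<Longrightarrow> f (Poly_Mapping.map ((*) c) x) = Poly_Mapping.map ((*) c) (f x)"
  unfolding is_linear_def by (metis (no_types))

lemma linear_0: "is_linear f \<Longrightarrow> f 0 = 0"
  using linear_add[of f 0 0] by simp

lemma linear_diff: "is_linear f \<Longrightarrow> f (x - y) = f x - f y"
  using linear_add[of f "x - y" y] by (simp add: eq_diff_eq)

lemma linear_sum: "is_linear f \<Longrightarrow> f (sum g A) = (\<Sum>a\<in>A. f (g a))"
  by (induction A rule: infinite_finite_induct) (auto simp: linear_0 linear_add)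

lemma linext_expansion: "linext bas x = x"
proof (rule poly_mapping_eqI)
  fix k
  have "finite I \<Longrightarrow> lk (\<Sum>i\<in>I. Poly_Mapping.map ((*) (lk x i)) (bas i)) k = (if k \<in> I then lk x k else 0)" for I
    by (induction I rule: finite_induct) (auto simp: lookup_single lookup_add lookup_map_mult when_def)
  then show "lk (linext bas x) k = lk x k"
    by (simp add: linext_def in_keys_iff)
qed

lemma linear_linext_comp: "is_linear f \<Longrightarrow> f (linext g x) = linext (\<lambda>a. f (g a)) x"
  by (simp add: linext_def linear_sum linear_smul)

lemma linear_expand: "is_linear f \<Longrightarrow> f x = linext (\<lambda>a. f (bas a)) x"
  by (metis linear_linext_comp linext_expansion)

lemma linear_eq_on_basis:
  "is_linear f \<Longrightarrow> is_linear g \<Longrightarrow> (\<And>a. f (bas a) = g (bas a)) \<Longrightarrow> f x = g x"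
  using linear_expand[of f x] linear_expand[of g x] by simp

lemma linear_eqI: "is_linear f \<Longrightarrow> is_linear g \<Longrightarrow> (\<And>a. f (bas a) = g (bas a)) \<Longrightarrow> f = g"
  using linear_eq_on_basis by blast

lemma keys_linext: fixes g :: "'a \<Rightarrow> 'b \<Rightarrow>\<^sub>0 'k::comm_ring_1"
  shows "ks (linext g x) \<subseteq> (\<Union>a\<in>ks x. ks (g a))"
proof -
  have "ks (linext g x) \<subseteq> (\<Union>a\<in>ks x. ks (Poly_Mapping.map ((*) (lk x a)) (g a)))"
    unfolding linext_def by (rule keys_sum)
  moreover have "ks (Poly_Mapping.map ((*) c) y) \<subseteq> ks y" for c :: 'k and y :: "'b \<Rightarrow>\<^sub>0 'k"
    by (auto simp: in_keys_iff lookup_map_mult)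
  ultimately show ?thesis by blast
qed

lemma linear_comp: "is_linear f \<Longrightarrow> is_linear g \<Longrightarrow> is_linear (\<lambda>x. f (g x))"
  by (simp add: is_linear_def)

lemma linear_id: "is_linear (\<lambda>x. x)"
  by (simp add: is_linear_def)

lemma linear_plus: "is_linear f \<Longrightarrow> is_linear g \<Longrightarrow> is_linear (\<lambda>x. f x + g x)"
  by (simp add: is_linear_def map_mult_add)

lemma linear_minus: "is_linear f \<Longrightarrow> is_linear g \<Longrightarrow> is_linear (\<lambda>x. f x - g x)"
  by (simp add: is_linear_def map_mult_diff)

lemma linear_const0: "is_linear (\<lambda>x. 0)"
  by (simp add: is_linear_def)

lemma bilinear_eqI:
  assumes "\<And>y. is_linear (\<lambda>x. F x y)" "\<And>y. is_linear (\<lambda>x. G x y)"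
    "\<And>x. is_linear (F x)" "\<And>x. is_linear (G x)" "\<And>a b. F (bas a) (bas b) = G (bas a) (bas b)"
  shows "F x y = G x y"
proof -
  have "F (bas a) = G (bas a)" for a by (rule linear_eqI) (use assms in auto)
  then show ?thesis using linear_eq_on_basis[of "\<lambda>x. F x y" "\<lambda>x. G x y" x] assms(1,2) by simp
qed

lemma linear_linext_param: "(\<And>a. is_linear (F a)) \<Longrightarrow> is_linear (\<lambda>y. linext (\<lambda>a. F a y) x)"
  unfolding is_linear_def linext_def
  by (simp add: sum.distrib map_mult_add map_mult_sum map_mult_mult mult.commute)

text \<open>When the index set is a monoid, scalars are constants of the monoid algebra; this
  form of linearity interacts well with ring automation.\<close>
lemma linear_ring_iff:
  fixes f :: "('a::monoid_add \<Rightarrow>\<^sub>0 'k::comm_ring_1) \<Rightarrow> ('b::monoid_add \<Rightarrow>\<^sub>0 'k)"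
  shows "is_linear f \<longleftrightarrow> (\<forall>x y. f (x + y) = f x + f y) \<and>
           (\<forall>c x. f (Poly_Mapping.single 0 c * x) = Poly_Mapping.single 0 c * f x)"
  unfolding is_linear_def by (simp add: map_mult_conv)

lemma linear_smul_ring:
  fixes f :: "('a::monoid_add \<Rightarrow>\<^sub>0 'k::comm_ring_1) \<Rightarrow> ('b::monoid_add \<Rightarrow>\<^sub>0 'k)"
  shows "is_linear f \<Longrightarrow> f (Poly_Mapping.single 0 c * x) = Poly_Mapping.single 0 c * f x"
  by (simp add: linear_ring_iff)

lemma single_as_smul: "Poly_Mapping.single a c = Poly_Mapping.single 0 c * (bas a :: 'a::monoid_add \<Rightarrow>\<^sub>0 'k::comm_ring_1)"
  by (simp add: mult_single)

lemma linear_single: fixes f :: "('a::monoid_add \<Rightarrow>\<^sub>0 'k::comm_ring_1) \<Rightarrow> ('b::monoid_add \<Rightarrow>\<^sub>0 'k)"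
  shows "is_linear f \<Longrightarrow> f (Poly_Mapping.single a c) = Poly_Mapping.single 0 c * f (bas a)"
  by (simp add: single_as_smul[of a c] linear_smul_ring)

lemma single0_lcomm:
  "x * (Poly_Mapping.single 0 c * y) = Poly_Mapping.single 0 c * (x * (y::'a::comm_monoid_add \<Rightarrow>\<^sub>0 'k::comm_ring_1))"
  by (simp add: mult.left_commute)

lemma linear_mult_right:
  fixes f :: "('a::monoid_add \<Rightarrow>\<^sub>0 'k::comm_ring_1) \<Rightarrow> ('b::comm_monoid_add \<Rightarrow>\<^sub>0 'k)"
  shows "is_linear f \<Longrightarrow> is_linear (\<lambda>x. f x * z)"
  by (simp add: linear_ring_iff distrib_right mult.assoc)

lemma linear_mult_left:
  fixes f :: "('a::monoid_add \<Rightarrow>\<^sub>0 'k::comm_ring_1) \<Rightarrow> ('b::comm_monoid_add \<Rightarrow>\<^sub>0 'k)"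
  shows "is_linear f \<Longrightarrow> is_linear (\<lambda>x. z * f x)"
  by (simp add: linear_ring_iff distrib_left single0_lcomm)

definition mult_map :: "(('a::comm_monoid_add \<Rightarrow>\<^sub>0 'k::comm_ring_1) \<Rightarrow> ('b::comm_monoid_add \<Rightarrow>\<^sub>0 'k)) \<Rightarrow> bool" where
  "mult_map f \<longleftrightarrow> is_linear f \<and> f 1 = 1 \<and> (\<forall>x y. f (x * y) = f x * f y)"

lemma mult_mapI:
  fixes f :: "('a::comm_monoid_add \<Rightarrow>\<^sub>0 'k::comm_ring_1) \<Rightarrow> ('b::comm_monoid_add \<Rightarrow>\<^sub>0 'k)"
  assumes l: "is_linear f" and one: "f (bas 0) = 1" and m: "\<And>a b. f (bas (a + b)) = f (bas a) * f (bas b)"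
  shows "mult_map f"
proof -
  have "f (x * y) = f x * f y" for x y
  proof (rule bilinear_eqI[where F="\<lambda>x y. f (x * y)" and G="\<lambda>x y. f x * f y"])
    show "is_linear (\<lambda>x. f (x * y))" for y
      using l by (simp add: linear_ring_iff distrib_right mult.assoc)
    show "is_linear (\<lambda>y. f (x * y))" for x
      using l by (simp add: linear_ring_iff distrib_left single0_lcomm)
    show "is_linear (\<lambda>x. f x * f y)" for y by (rule linear_mult_right[OF l])
    show "is_linear (\<lambda>y. f x * f y)" for x by (rule linear_mult_left[OF l])
    show "f (bas a * bas b) = f (bas a) * f (bas b)" for a b by (simp add: mult_single m)
  qed
  then show ?thesis using l one by (simp add: mult_map_def)
qed

lemma mult_map_linear: "mult_map f \<Longrightarrow> is_linear f" by (simp add: mult_map_def)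
lemma mult_map_one: "mult_map f \<Longrightarrow> f 1 = 1" by (simp add: mult_map_def)
lemma mult_map_mult: "mult_map f \<Longrightarrow> f (x * y) = f x * f y" by (simp add: mult_map_def)

lemma mult_map_comp: "mult_map f \<Longrightarrow> mult_map g \<Longrightarrow> mult_map (\<lambda>x. f (g x))"
  by (simp add: mult_map_def linear_comp)

lemma mult_map_id: "mult_map (\<lambda>x::'a::comm_monoid_add \<Rightarrow>\<^sub>0 'k::comm_ring_1. x)"
  by (simp add: mult_map_def linear_id)

lemma mult_map_prod_mset: "mult_map f \<Longrightarrow> f (prod_mset (image_mset h M)) = prod_mset (image_mset (\<lambda>x. f (h x)) M)"
  by (induction M) (simp_all add: mult_map_one mult_map_mult)

section \<open>Tensor products\<close>

definition tens :: "('a \<Rightarrow>\<^sub>0 'k::comm_ring_1) \<Rightarrow> ('b \<Rightarrow>\<^sub>0 'k) \<Rightarrow> ('a \<times> 'b \<Rightarrow>\<^sub>0 'k)" where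
  "tens x y = linext (\<lambda>a. linext (\<lambda>b. bas (a, b)) y) x"

lemma tens_linear1: "is_linear (\<lambda>x. tens x y)"
  unfolding tens_def by (rule is_linear_linext)

lemma tens_linear2: "is_linear (\<lambda>y. tens x y)"
  unfolding tens_def by (rule linear_linext_param) (rule is_linear_linext)

lemma tens_bas [simp]: "tens (bas a) (bas b) = bas (a, b)"
  by (simp add: tens_def)

lemma tensor_tens: "tensor = tens"
proof (intro ext)
  fix x y :: "'k::comm_ring_1 H"
  show "tensor x y = tens x y"
    unfolding tensor_def tens_def linext_def
    by (simp add: map_mult_sum map_mult_single)
qed

lemma tens_add1: "tens (x + x') y = tens x y + tens x' y"
  using tens_linear1 linear_add by fastforce
lemma tens_add2: "tens x (y + y') = tens x y + tens x y'"
  using tens_linear2 linear_add by fastforce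
lemma tens_diff1: "tens (x - x') y = tens x y - tens x' y"
  using tens_linear1 linear_diff by fastforce
lemma tens_diff2: "tens x (y - y') = tens x y - tens x y'"
  using tens_linear2 linear_diff by fastforce

lemma tens_smul1: "tens (Poly_Mapping.single 0 c * x) y = Poly_Mapping.single 0 c * tens (x::'a::monoid_add \<Rightarrow>\<^sub>0 'k::comm_ring_1) (y::'b::monoid_add \<Rightarrow>\<^sub>0 'k)"
  by (rule linear_smul_ring[OF tens_linear1])
lemma tens_smul2: "tens x (Poly_Mapping.single 0 c * y) = Poly_Mapping.single 0 c * tens (x::'a::monoid_add \<Rightarrow>\<^sub>0 'k::comm_ring_1) (y::'b::monoid_add \<Rightarrow>\<^sub>0 'k)"
  by (rule linear_smul_ring[OF tens_linear2])

lemma tens_single: fixes a :: "'a::monoid_add" and b :: "'b::monoid_add"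
  shows "tens (Poly_Mapping.single a c) (Poly_Mapping.single b d) = Poly_Mapping.single (a, b) (c * d :: 'k::comm_ring_1)"
proof -
  have "tens (Poly_Mapping.single a c) (Poly_Mapping.single b d)
      = Poly_Mapping.single 0 d * (Poly_Mapping.single 0 c * bas (a, b))"
    by (simp only: single_as_smul[of a c] single_as_smul[of b d]
          tens_smul1 tens_smul2 tens_bas)
  then show ?thesis by (simp add: mult_single mult.commute)
qed

lemma tens_single_one: fixes a :: "'a::monoid_add"
  shows "tens (Poly_Mapping.single a c) (1 :: 'b::monoid_add \<Rightarrow>\<^sub>0 'k::comm_ring_1) = Poly_Mapping.single (a, 0) c"
  using tens_single[of a c 0 1] by simp

lemma tens_bas_one: "tens (bas a) 1 = bas (a, 0)"
  using tens_bas[of a 0] by simp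

lemma tens_mult:
  fixes x x' :: "'a::comm_monoid_add \<Rightarrow>\<^sub>0 'k::comm_ring_1" and y y' :: "'b::comm_monoid_add \<Rightarrow>\<^sub>0 'k"
  shows "tens x y * tens x' y' = tens (x * x') (y * y')"
proof (rule bilinear_eqI[where F="\<lambda>x y. tens x y * tens x' y'" and G="\<lambda>x y. tens (x * x') (y * y')"])
  show "is_linear (\<lambda>x. tens x y * tens x' y')" for y by (rule linear_mult_right[OF tens_linear1])
  show "is_linear (\<lambda>y. tens x y * tens x' y')" for x by (rule linear_mult_right[OF tens_linear2])
  show "is_linear (\<lambda>x. tens (x * x') (y * y'))" for y
    by (simp add: linear_ring_iff distrib_right mult.assoc tens_add1 tens_smul1)
  show "is_linear (\<lambda>y. tens (x * x') (y * y'))" for x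
    by (simp add: linear_ring_iff distrib_right mult.assoc tens_add2 tens_smul2)
  fix a b
  show "tens (bas a) (bas b) * tens x' y' = tens (bas a * x') (bas b * y')"
  proof (rule bilinear_eqI[where F="\<lambda>x' y'. tens (bas a) (bas b) * tens x' y'" and G="\<lambda>x' y'. tens (bas a * x') (bas b * y')"])
    show "is_linear (\<lambda>x. tens (bas a) (bas b) * tens x y)" for y by (rule linear_mult_left[OF tens_linear1])
    show "is_linear (\<lambda>y. tens (bas a) (bas b) * tens x y)" for x by (rule linear_mult_left[OF tens_linear2])
    show "is_linear (\<lambda>x. tens (bas a * x) (bas b * y))" for y
      by (simp add: linear_ring_iff distrib_left single0_lcomm tens_add1 tens_smul1)
    show "is_linear (\<lambda>y. tens (bas a * x) (bas b * y))" for x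
      by (simp add: linear_ring_iff distrib_left single0_lcomm tens_add2 tens_smul2)
    show "tens (bas a) (bas b) * tens (bas a') (bas b') = tens (bas a * bas a') (bas b * bas b')" for a' b'
      by (simp add: mult_single)
  qed
qed

lemma tens_one [simp]: "tens 1 1 = (1 :: ('a::comm_monoid_add \<times> 'b::comm_monoid_add) \<Rightarrow>\<^sub>0 'k::comm_ring_1)"
  by (metis single_one tens_bas zero_prod_def)

definition tmap :: "(('a \<Rightarrow>\<^sub>0 'k::comm_ring_1) \<Rightarrow> ('c \<Rightarrow>\<^sub>0 'k)) \<Rightarrow> (('b \<Rightarrow>\<^sub>0 'k) \<Rightarrow> ('d \<Rightarrow>\<^sub>0 'k)) \<Rightarrow> ('a \<times> 'b \<Rightarrow>\<^sub>0 'k) \<Rightarrow> ('c \<times> 'd \<Rightarrow>\<^sub>0 'k)" where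
  "tmap F G = linext (\<lambda>(a, b). tens (F (bas a)) (G (bas b)))"

lemma tensor_map_tmap: "tensor_map = tmap"
  by (intro ext) (simp add: tensor_map_def tmap_def tensor_tens fr_def)

lemma tmap_linear: "is_linear (tmap F G)"
  unfolding tmap_def by (rule is_linear_linext)

lemma tmap_bas [simp]: "tmap F G (bas (a, b)) = tens (F (bas a)) (G (bas b))"
  by (simp add: tmap_def)

lemma tmap_tens: "is_linear F \<Longrightarrow> is_linear G \<Longrightarrow> tmap F G (tens x y) = tens (F x) (G y)"
  by (rule bilinear_eqI[where F="\<lambda>x y. tmap F G (tens x y)"])
     (auto intro: linear_comp[OF tmap_linear] tens_linear1 tens_linear2
       linear_comp[OF tens_linear1] linear_comp[OF tens_linear2])

lemma tmap_mult_map: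
  fixes F :: "('a::comm_monoid_add \<Rightarrow>\<^sub>0 'k::comm_ring_1) \<Rightarrow> ('c::comm_monoid_add \<Rightarrow>\<^sub>0 'k)"
    and G :: "('b::comm_monoid_add \<Rightarrow>\<^sub>0 'k) \<Rightarrow> ('d::comm_monoid_add \<Rightarrow>\<^sub>0 'k)"
  assumes F: "mult_map F" and G: "mult_map G" shows "mult_map (tmap F G)"
proof (rule mult_mapI[OF tmap_linear])
  show "tmap F G (bas 0) = 1" using F G by (simp add: zero_prod_def mult_map_one)
  have split: "H (bas (a + b)) = H (bas a) * H (bas b)" if "mult_map H" for H :: "('e::comm_monoid_add \<Rightarrow>\<^sub>0 'k) \<Rightarrow> _" and a b
    using mult_map_mult[OF that, of "bas a" "bas b"] by (simp add: mult_single)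
  show "tmap F G (bas (p + q)) = tmap F G (bas p) * tmap F G (bas q)" for p q
    by (cases p; cases q) (simp add: split[OF F] split[OF G] tens_mult)
qed

lemma tmap_comp: "is_linear F \<Longrightarrow> is_linear G \<Longrightarrow> tmap F G (tmap F' G' z) = tmap (\<lambda>x. F (F' x)) (\<lambda>x. G (G' x)) z"
  by (rule linear_eq_on_basis[of _ _ z]) (auto intro: linear_comp tmap_linear simp: tmap_tens)

lemma tmap_id: "tmap (\<lambda>x. x) (\<lambda>x. x) z = z"
  by (rule linear_eq_on_basis[where g="\<lambda>x. x", OF tmap_linear linear_id]) auto

lemma tmap_id_add: "is_linear F \<Longrightarrow> is_linear G \<Longrightarrow> tmap (\<lambda>x. x) (\<lambda>x. F x + G x) z = tmap (\<lambda>x. x) F z + tmap (\<lambda>x. x) G z"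
  by (rule linear_eq_on_basis[OF tmap_linear linear_plus[OF tmap_linear tmap_linear]]) (auto simp: tens_add2)

lemma tmap_id_diff: "is_linear F \<Longrightarrow> is_linear G \<Longrightarrow> tmap (\<lambda>x. x) (\<lambda>x. F x - G x) z = tmap (\<lambda>x. x) F z - tmap (\<lambda>x. x) G z"
  by (rule linear_eq_on_basis[OF tmap_linear linear_minus[OF tmap_linear tmap_linear]]) (auto simp: tens_diff2)

lemma fr_bas: "fr w = bas w"
  by (simp add: fr_def)

lemma fsize_add [simp]: "fsize (a + b) = fsize a + fsize b" by (simp add: fsize_def)
lemma fsize_empty [simp]: "fsize {#} = 0" by (simp add: fsize_def)
lemma fsize_add_mset [simp]: "fsize (add_mset t w) = tsize t + fsize w" by (simp add: fsize_def)

lemma tsize_Node [simp]: "tsize (Node ts) = 1 + fsize ts"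
  by (simp add: fsize_def)

declare tsize.simps [simp del]

lemma tsize_le_fsize: "t \<in># w \<Longrightarrow> tsize t \<le> fsize w"
  by (metis fsize_add_mset le_add1 multi_member_split)

lemma bas_prod: "(bas w :: 'k::comm_ring_1 H) = prod_mset (image_mset (\<lambda>t. bas {#t#}) w)"
proof (induction w)
  case (add t w)
  have "(bas (add_mset t w) :: 'k H) = bas {#t#} * bas w" by (simp add: mult_single)
  then show ?case using add by simp
qed simp

lemma mult_map_eq_forest:
  assumes "mult_map f" "mult_map g" "\<And>T. T \<in># ts \<Longrightarrow> f (bas {#T#}) = g (bas {#T#})"
  shows "f (bas ts :: 'k::comm_ring_1 H) = g (bas ts)"
  using assms by (subst (1 2) bas_prod) (simp add: mult_map_prod_mset cong: image_mset_cong)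

lemma mult_map_eq_trees:
  assumes "mult_map f" "mult_map g" "\<And>T. f (bas {#T#} :: 'k::comm_ring_1 H) = g (bas {#T#})"
  shows "f = g"
  by (rule linear_eqI[OF mult_map_linear[OF assms(1)] mult_map_linear[OF assms(2)]])
     (rule mult_map_eq_forest[OF assms(1,2)], simp add: assms(3))

lemma Bplus_linear: "is_linear Bplus"
  unfolding Bplus_def by (rule is_linear_linext)
lemma Bplus_bas [simp]: "Bplus (bas w) = bas {#Node w#}"
  by (simp add: Bplus_def fr_bas)

lemma id_tensor_Bplus_linear: "is_linear id_tensor_Bplus"
  unfolding id_tensor_Bplus_def by (rule is_linear_linext)
lemma id_tensor_Bplus_bas [simp]: "id_tensor_Bplus (bas (a, b)) = bas (a, {#Node b#})"
  by (simp add: id_tensor_Bplus_def)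

lemma id_tensor_Bplus_tmap: "id_tensor_Bplus = tmap (\<lambda>x. x) Bplus"
  by (rule linear_eqI[OF id_tensor_Bplus_linear tmap_linear]) auto

lemma Delta_linear: "is_linear Delta"
  unfolding Delta_def by (rule is_linear_linext)
lemma Delta_bas [simp]: "Delta (bas w) = cop_forest w"
  by (simp add: Delta_def)

lemma Delta_mult: "mult_map (Delta :: 'k::comm_ring_1 H \<Rightarrow> 'k HH)"
proof (rule mult_mapI[OF Delta_linear])
  show "Delta (bas 0) = 1" unfolding Delta_bas by (simp add: cop_forest_def)
  show "Delta (bas (a + b)) = Delta (bas a) * Delta (bas b)" for a b
    unfolding Delta_bas by (simp add: cop_forest_def)
qed

lemma Delta_one [simp]: "Delta 1 = 1"
  by (rule mult_map_one[OF Delta_mult])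

lemma Delta_single: "Delta (Poly_Mapping.single a c) = Poly_Mapping.single 0 c * (cop_forest a :: 'k::comm_ring_1 HH)"
  using linear_single[OF Delta_linear, of a c] by simp

lemma Delta_tree: "Delta (bas {#Node ts#}) = bas ({#Node ts#}, {#}) + id_tensor_Bplus (Delta (bas ts))"
  by (simp add: cop_forest_def)

declare cop_tree.simps [simp del]

lemma id_tensor_dual_linear: "is_linear (id_tensor_dual \<alpha>)"
  unfolding id_tensor_dual_def by (rule is_linear_linext)
lemma id_tensor_dual_bas [simp]: "id_tensor_dual \<alpha> (bas (a, b)) = Poly_Mapping.single a (\<alpha> b)"
  by (simp add: id_tensor_dual_def)

definition unit_dual :: "'k::comm_ring_1 dual \<Rightarrow> 'k H \<Rightarrow> 'k H" where
  "unit_dual \<alpha> = linext (\<lambda>w. Poly_Mapping.single {#} (\<alpha> w))"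

lemma unit_dual_linear: "is_linear (unit_dual \<alpha>)"
  unfolding unit_dual_def by (rule is_linear_linext)

lemma unit_dual_dapply: "unit_dual \<alpha> h = Poly_Mapping.single {#} (dapply \<alpha> h)"
  by (rule poly_mapping_eqI)
     (simp add: unit_dual_def linext_def dapply_def lookup_sum lookup_map_mult lookup_single when_def sum_distrib_left)

lemma dapply_unit_dual: "dapply \<alpha> h = lk (unit_dual \<alpha> h) {#}"
  by (simp add: unit_dual_dapply)

lemma dapply_bas [simp]: "dapply \<alpha> (bas w) = \<alpha> w"
  by (simp add: dapply_def)

lemma dapply_add: "dapply \<alpha> (x + y) = dapply \<alpha> x + dapply \<alpha> y"
  by (simp add: dapply_unit_dual linear_add[OF unit_dual_linear] lookup_add)
lemma dapply_smul: "dapply \<alpha> (Poly_Mapping.single 0 c * x) = c * dapply \<alpha> x"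
  by (simp add: dapply_unit_dual linear_smul_ring[OF unit_dual_linear] lookup_single0_mult)

lemma delta_unfold: "delta \<alpha> h = id_tensor_dual \<alpha> (Delta h) - unit_dual \<alpha> h"
  by (simp add: delta_def unit_dual_dapply)

lemma delta_linear: "is_linear (delta \<alpha>)"
  unfolding delta_unfold[abs_def]
  by (intro linear_minus linear_comp[OF id_tensor_dual_linear Delta_linear] unit_dual_linear)

lemma delta_plus: "delta (\<lambda>w. \<alpha> w + \<beta> w) x = delta \<alpha> x + delta \<beta> x"
proof -
  have "id_tensor_dual (\<lambda>w. \<alpha> w + \<beta> w) x' = id_tensor_dual \<alpha> x' + id_tensor_dual \<beta> x'" for x'
    by (rule linear_eq_on_basis[OF id_tensor_dual_linear linear_plus[OF id_tensor_dual_linear id_tensor_dual_linear]])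
       (auto simp: single_add)
  moreover have "unit_dual (\<lambda>w. \<alpha> w + \<beta> w) x = unit_dual \<alpha> x + unit_dual \<beta> x"
    by (rule linear_eq_on_basis[OF unit_dual_linear linear_plus[OF unit_dual_linear unit_dual_linear]])
       (auto simp: unit_dual_def single_add)
  ultimately show ?thesis by (simp add: delta_unfold)
qed

lemma delta_zero: "delta (\<lambda>w. 0) x = (0 :: 'k::comm_ring_1 H)"
  using delta_plus[of "\<lambda>w. 0" "\<lambda>w. 0" x] by simp

lemma phi_linear: "is_linear (phi M)"
  unfolding phi_def by (rule is_linear_linext)

lemma phi_bas: "phi M (bas w) = prod_mset (image_mset (phi_tree M) w)"
  by (simp add: phi_def)

lemma phi_mult: "mult_map (phi M)"
proof (rule mult_mapI[OF phi_linear])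
  show "phi M (bas 0) = 1" unfolding phi_bas by simp
  show "phi M (bas (a + b)) = phi M (bas a) * phi M (bas b)" for a b
    unfolding phi_bas by simp
qed

lemma phi_Bplus: "is_linear M \<Longrightarrow> phi M (Bplus x) = M (phi M x)"
  by (rule linear_eq_on_basis[of _ _ x])
     (auto intro: linear_comp[OF phi_linear Bplus_linear] linear_comp[OF _ phi_linear] simp: phi_bas)

lemma phi_unique:
  assumes f: "mult_map f" and fB: "\<And>x. f (Bplus x) = M (f x)"
  shows "f = phi M"
proof (rule mult_map_eq_trees[OF f phi_mult])
  fix T show "f (bas {#T#}) = phi M (bas {#T#})"
  proof (induction T)
    case (Node ts)
    have "f (bas ts) = phi M (bas ts)"
      by (rule mult_map_eq_forest[OF f phi_mult]) (use Node in auto)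
    then show ?case using fB[of "bas ts"] phi_bas[of M ts] by (simp add: phi_bas)
  qed
qed

lemma phi_Bplus_id: "phi Bplus = (\<lambda>x::'k::comm_ring_1 H. x)"
  by (rule phi_unique[symmetric]) (auto simp: mult_map_id)

section \<open>The degree filtration and part (1)\<close>

text \<open>\<open>le_deg n x\<close> / \<open>lo_deg n x\<close>: \<open>x\<close> lies in \<open>\<Oplus>\<^sub>m\<^sub>\<le>\<^sub>n H_{R,m}\<close> / \<open>\<Oplus>\<^sub>m\<^sub><\<^sub>n H_{R,m}\<close>;
  \<open>grad n z\<close>: \<open>z\<close> is homogeneous of total degree \<open>n\<close> in \<open>H_R \<otimes> H_R\<close>.\<close>
definition le_deg :: "nat \<Rightarrow> 'k::comm_ring_1 H \<Rightarrow> bool" where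
  "le_deg n x \<longleftrightarrow> (\<forall>v\<in>ks x. fsize v \<le> n)"
definition lo_deg :: "nat \<Rightarrow> 'k::comm_ring_1 H \<Rightarrow> bool" where
  "lo_deg n x \<longleftrightarrow> (\<forall>v\<in>ks x. fsize v < n)"
definition grad :: "nat \<Rightarrow> 'k::comm_ring_1 HH \<Rightarrow> bool" where
  "grad n z \<longleftrightarrow> (\<forall>p\<in>ks z. fsize (fst p) + fsize (snd p) = n)"

lemma keys_diff_sub: "ks (x - y) \<subseteq> ks x \<union> ks (y :: 'a \<Rightarrow>\<^sub>0 'k::ab_group_add)"
  by (auto simp: in_keys_iff lookup_minus)

lemma lo_add: "lo_deg n x \<Longrightarrow> lo_deg n y \<Longrightarrow> lo_deg n (x + y)"
  unfolding lo_deg_def using keys_add[of x y] by auto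
lemma le_add: "le_deg n x \<Longrightarrow> le_deg n y \<Longrightarrow> le_deg n (x + y)"
  unfolding le_deg_def using keys_add[of x y] by auto
lemma le_diff: "le_deg n x \<Longrightarrow> le_deg n y \<Longrightarrow> le_deg n (x - y)"
  unfolding le_deg_def using keys_diff_sub[of x y] by auto
lemma lo_le: "lo_deg n x \<Longrightarrow> le_deg n x"
  unfolding lo_deg_def le_deg_def by auto
lemma le_lo_Suc: "le_deg n x \<Longrightarrow> lo_deg (Suc n) x"
  unfolding lo_deg_def le_deg_def by auto
lemma le_bas: "le_deg (fsize w) (bas w)"
  unfolding le_deg_def by simp
lemma lo_linext: "(\<And>w. w \<in> ks x \<Longrightarrow> lo_deg n (g w)) \<Longrightarrow> lo_deg n (linext g x)"
  unfolding lo_deg_def using keys_linext[of g x] by auto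
lemma le_linext: "(\<And>w. w \<in> ks x \<Longrightarrow> le_deg n (g w)) \<Longrightarrow> le_deg n (linext g x)"
  unfolding le_deg_def using keys_linext[of g x] by auto

lemma le_lo_mult: "le_deg m x \<Longrightarrow> lo_deg n y \<Longrightarrow> lo_deg (m + n) (x * y)"
  unfolding lo_deg_def le_deg_def using keys_mult[of x y] by fastforce
lemma lo_le_mult: "lo_deg m x \<Longrightarrow> le_deg n y \<Longrightarrow> lo_deg (m + n) (x * y)"
  unfolding lo_deg_def le_deg_def using keys_mult[of x y] by fastforce

lemma grad_mult: "grad m z \<Longrightarrow> grad n z' \<Longrightarrow> grad (m + n) (z * z')"
  unfolding grad_def using keys_mult[of z z'] by fastforce
lemma grad_add: "grad n z \<Longrightarrow> grad n z' \<Longrightarrow> grad n (z + z')"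
  unfolding grad_def using keys_add[of z z'] by auto
lemma grad_one: "grad 0 1"
  unfolding grad_def by (simp add: zero_prod_def)
lemma grad_id_tensor_Bplus: "grad n z \<Longrightarrow> grad (Suc n) (id_tensor_Bplus z)"
  unfolding grad_def id_tensor_Bplus_def using keys_linext[of "\<lambda>(a, b). bas (a, {#Node b#})" z]
  by fastforce

lemma grad_prod_mset: "(\<And>x. x \<in># M \<Longrightarrow> grad (d x) (f x)) \<Longrightarrow> grad (sum_mset (image_mset d M)) (prod_mset (image_mset f M))"
  by (induction M) (auto simp: grad_one grad_mult)

lemma grad_cop_tree: "grad (tsize T) (cop_tree T :: 'k::comm_ring_1 HH)"
proof (induction T)
  case (Node ts)
  have "grad (fsize ts) (prod_mset (image_mset (cop_tree :: _ \<Rightarrow> 'k HH) ts))"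
    unfolding fsize_def by (rule grad_prod_mset) (use Node in simp)
  then have "grad (Suc (fsize ts)) (id_tensor_Bplus (Delta (bas ts)) :: 'k HH)"
    by (simp add: grad_id_tensor_Bplus cop_forest_def)
  moreover have "grad (Suc (fsize ts)) (bas ({#Node ts#}, {#}) :: 'k HH)"
    by (simp add: grad_def)
  ultimately have "grad (Suc (fsize ts)) (Delta (bas {#Node ts#}) :: 'k HH)"
    by (simp only: Delta_tree grad_add)
  then show ?case by (simp add: cop_forest_def)
qed

lemma grad_cop_forest: "grad (fsize w) (cop_forest w)"
  unfolding cop_forest_def fsize_def by (rule grad_prod_mset) (rule grad_cop_tree)

lemma le_delta_bas: "le_deg (fsize w) (delta \<alpha> (bas w))"
proof -
  have "le_deg (fsize w) (id_tensor_dual \<alpha> (cop_forest w))"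
    unfolding id_tensor_dual_def
  proof (rule le_linext)
    fix p assume "p \<in> ks (cop_forest w)"
    then have "fsize (fst p) \<le> fsize w" using grad_cop_forest[of w] unfolding grad_def by fastforce
    then show "le_deg (fsize w) ((\<lambda>(a, b). Poly_Mapping.single a (\<alpha> b)) p)"
      by (cases p) (auto simp: le_deg_def)
  qed
  moreover have "le_deg (fsize w) (unit_dual \<alpha> (bas w))" by (simp add: le_deg_def unit_dual_def)
  ultimately show ?thesis by (simp add: delta_unfold le_diff)
qed

lemma le_delta: "le_deg n x \<Longrightarrow> le_deg n (delta \<alpha> x)"
  by (subst linear_expand[OF delta_linear], rule le_linext)
     (use le_delta_bas in \<open>fastforce simp: le_deg_def\<close>)

lemma lo_Bplus: "lo_deg n x \<Longrightarrow> lo_deg (Suc n) (Bplus x)"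
  unfolding Bplus_def fr_bas by (rule lo_linext) (auto simp: lo_deg_def)

definition Bplus_delta :: "'k::comm_ring_1 dual \<Rightarrow> 'k H \<Rightarrow> 'k H" where
  "Bplus_delta \<alpha> h = Bplus h + delta \<alpha> h"

lemma theta_phi: "theta \<alpha> = phi (Bplus_delta \<alpha>)"
  by (simp add: theta_def Bplus_delta_def[abs_def])

lemma Bplus_delta_linear: "is_linear (Bplus_delta \<alpha>)"
  unfolding Bplus_delta_def[abs_def] by (rule linear_plus[OF Bplus_linear delta_linear])

lemma theta_linear: "is_linear (theta \<alpha>)"
  unfolding theta_phi by (rule phi_linear)

lemma theta_mult: "mult_map (theta \<alpha>)"
  unfolding theta_phi by (rule phi_mult)

lemma theta_Bplus: "theta \<alpha> (Bplus x) = Bplus_delta \<alpha> (theta \<alpha> x)"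
  unfolding theta_phi by (rule phi_Bplus[OF Bplus_delta_linear])

lemma forest_unitriangular:
  assumes "\<And>T. T \<in># w \<Longrightarrow> lo_deg (tsize T) (t T - bas {#T#})"
  shows "lo_deg (fsize w) (prod_mset (image_mset t w) - (bas w :: 'k::comm_ring_1 H))"
  using assms
proof (induction w)
  case empty then show ?case by (simp add: lo_deg_def)
next
  case (add T w)
  define P where "P = prod_mset (image_mset t w)"
  have IH: "lo_deg (fsize w) (P - bas w)" using add by (simp add: P_def)
  have tree: "lo_deg (tsize T) (t T - bas {#T#})" using add by simp
  have P_le: "le_deg (fsize w) P"
    using le_add[OF lo_le[OF IH] le_bas[of w]] by simp
  have split: "t T * P - (bas (add_mset T w) :: 'k H) = (t T - bas {#T#}) * P + bas {#T#} * (P - bas w)"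
    by (simp add: algebra_simps mult_single)
  have "lo_deg (tsize T + fsize w) ((t T - bas {#T#}) * P)" by (rule lo_le_mult[OF tree P_le])
  moreover have "lo_deg (tsize T + fsize w) (bas {#T#} * (P - bas w))"
    using le_lo_mult[OF le_bas[of "{#T#}"] IH] by simp
  ultimately have "lo_deg (tsize T + fsize w) (t T * P - bas (add_mset T w))"
    unfolding split by (rule lo_add)
  then show ?case by (simp add: P_def)
qed

lemma tree_unitriangular: "lo_deg (tsize T) (phi_tree (Bplus_delta \<alpha>) T - (bas {#T#} :: 'k::comm_ring_1 H))"
proof (induction T)
  case (Node ts)
  define P where "P = prod_mset (image_mset (phi_tree (Bplus_delta \<alpha>)) ts)"
  have IH: "lo_deg (fsize ts) (P - bas ts)"
    unfolding P_def by (rule forest_unitriangular) (use Node in auto)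
  have P_le: "le_deg (fsize ts) P"
    using le_add[OF lo_le[OF IH] le_bas[of ts]] by simp
  have "phi_tree (Bplus_delta \<alpha>) (Node ts) - bas {#Node ts#} = Bplus (P - bas ts) + delta \<alpha> P"
    by (simp add: P_def Bplus_delta_def linear_diff[OF Bplus_linear])
  moreover have "lo_deg (Suc (fsize ts)) (Bplus (P - bas ts))" by (rule lo_Bplus[OF IH])
  moreover have "lo_deg (Suc (fsize ts)) (delta \<alpha> P)" by (rule le_lo_Suc[OF le_delta[OF P_le]])
  ultimately show ?case by (simp add: lo_add)
qed

theorem theta_unitriangular:
  "\<forall>v\<in>ks (theta \<alpha> (fr w) - fr w). fsize v < fsize (w :: forest)"
proof -
  have "lo_deg (fsize w) (theta \<alpha> (fr w) - fr w)"
    unfolding theta_phi fr_bas phi_bas by (rule forest_unitriangular) (rule tree_unitriangular)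
  then show ?thesis by (simp add: lo_deg_def)
qed

section \<open>Coassociativity of the coproduct\<close>

type_synonym 'k H3 = "(forest \<times> forest \<times> forest) \<Rightarrow>\<^sub>0 'k"

definition reassoc :: "(('a \<times> 'b) \<times> 'c \<Rightarrow>\<^sub>0 'k::comm_ring_1) \<Rightarrow> ('a \<times> ('b \<times> 'c) \<Rightarrow>\<^sub>0 'k)" where
  "reassoc = linext (\<lambda>((a, b), c). bas (a, (b, c)))"

lemma reassoc_linear: "is_linear reassoc"
  unfolding reassoc_def by (rule is_linear_linext)
lemma reassoc_bas [simp]: "reassoc (bas ((a, b), c)) = bas (a, (b, c))"
  by (simp add: reassoc_def)

lemma reassoc_mult: "mult_map (reassoc :: (('a::comm_monoid_add \<times> 'b::comm_monoid_add) \<times> 'c::comm_monoid_add \<Rightarrow>\<^sub>0 'k::comm_ring_1) \<Rightarrow> _)"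
proof (rule mult_mapI[OF reassoc_linear])
  show "reassoc (bas 0 :: ((('a \<times> 'b) \<times> 'c) \<Rightarrow>\<^sub>0 'k)) = 1"
    by (simp add: zero_prod_def flip: single_one)
  show "reassoc (bas (p + q) :: ((('a \<times> 'b) \<times> 'c) \<Rightarrow>\<^sub>0 'k)) = reassoc (bas p) * reassoc (bas q)" for p q
    by (cases p; cases q) (auto simp: mult_single)
qed

definition tens_right :: "'c \<Rightarrow> ('a \<times> 'b \<Rightarrow>\<^sub>0 'k::comm_ring_1) \<Rightarrow> ('a \<times> ('b \<times> 'c) \<Rightarrow>\<^sub>0 'k)" where
  "tens_right c = linext (\<lambda>(p, q). bas (p, (q, c)))"

lemma tens_right_linear: "is_linear (tens_right c)"
  unfolding tens_right_def by (rule is_linear_linext)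
lemma tens_right_bas [simp]: "tens_right c (bas (p, q)) = bas (p, (q, c))"
  by (simp add: tens_right_def)

lemma reassoc_tens: "reassoc (tens Z (bas c)) = tens_right c Z"
  by (rule linear_eq_on_basis[OF linear_comp[OF reassoc_linear tens_linear1] tens_right_linear]) auto

lemma reassoc_tens_one: "reassoc (tens Z 1) = tens_right 0 Z"
  using reassoc_tens[of Z 0] by simp

definition id_id_Bplus :: "'k::comm_ring_1 H3 \<Rightarrow> 'k H3" where
  "id_id_Bplus = linext (\<lambda>(a, (b, c)). bas (a, (b, {#Node c#})))"

lemma id_id_Bplus_linear: "is_linear id_id_Bplus"
  unfolding id_id_Bplus_def by (rule is_linear_linext)
lemma id_id_Bplus_bas [simp]: "id_id_Bplus (bas (a, (b, c))) = bas (a, (b, {#Node c#}))"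
  by (simp add: id_id_Bplus_def)

definition id_Bplus_unit :: "'k::comm_ring_1 HH \<Rightarrow> 'k H3" where
  "id_Bplus_unit = linext (\<lambda>(a, b). bas (a, ({#Node b#}, {#})))"

lemma id_Bplus_unit_linear: "is_linear id_Bplus_unit"
  unfolding id_Bplus_unit_def by (rule is_linear_linext)
lemma id_Bplus_unit_bas [simp]: "id_Bplus_unit (bas (a, b)) = bas (a, ({#Node b#}, {#}))"
  by (simp add: id_Bplus_unit_def)

lemma Delta_id_id_Bplus:
  "reassoc (tmap Delta (\<lambda>x. x) (id_tensor_Bplus Z)) = id_id_Bplus (reassoc (tmap Delta (\<lambda>x. x) (Z :: 'k::comm_ring_1 HH)))"
proof (rule linear_eq_on_basis[of _ _ Z])
  show "is_linear (\<lambda>Z. reassoc (tmap Delta (\<lambda>x. x) (id_tensor_Bplus Z)))"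
    by (intro linear_comp[OF reassoc_linear] linear_comp[OF tmap_linear] id_tensor_Bplus_linear)
  show "is_linear (\<lambda>Z. id_id_Bplus (reassoc (tmap Delta (\<lambda>x. x) (Z :: 'k HH))))"
    by (intro linear_comp[OF id_id_Bplus_linear] linear_comp[OF reassoc_linear] tmap_linear)
  have "tens_right {#Node b#} Y = id_id_Bplus (tens_right b Y)" for b and Y :: "'k HH"
    by (rule linear_eq_on_basis[OF tens_right_linear linear_comp[OF id_id_Bplus_linear tens_right_linear]]) auto
  then show "reassoc (tmap Delta (\<lambda>x. x) (id_tensor_Bplus (bas p))) = id_id_Bplus (reassoc (tmap Delta (\<lambda>x. x) (bas p :: 'k HH)))" for p
    by (cases p) (simp add: reassoc_tens)
qed

lemma Delta_id_Bplus:
  "tmap (\<lambda>x. x) Delta (id_tensor_Bplus Z) = id_Bplus_unit Z + id_id_Bplus (tmap (\<lambda>x. x) Delta (Z :: 'k::comm_ring_1 HH))"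
proof (rule linear_eq_on_basis[of _ _ Z])
  show "is_linear (\<lambda>Z. tmap (\<lambda>x. x) Delta (id_tensor_Bplus Z))"
    by (intro linear_comp[OF tmap_linear] id_tensor_Bplus_linear)
  show "is_linear (\<lambda>Z. id_Bplus_unit Z + id_id_Bplus (tmap (\<lambda>x. x) Delta (Z :: 'k HH)))"
    by (intro linear_plus id_Bplus_unit_linear linear_comp[OF id_id_Bplus_linear tmap_linear])
  have tens_id_Bplus: "tens (bas a) (id_tensor_Bplus Y) = id_id_Bplus (tens (bas a) (Y :: 'k HH))" for a Y
    by (rule linear_eq_on_basis[OF linear_comp[OF tens_linear2 id_tensor_Bplus_linear]
          linear_comp[OF id_id_Bplus_linear tens_linear2]]) auto
  show "tmap (\<lambda>x. x) Delta (id_tensor_Bplus (bas p)) = id_Bplus_unit (bas p) + id_id_Bplus (tmap (\<lambda>x. x) Delta (bas p :: 'k HH))" for p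
    by (cases p) (simp add: Delta_tree[simplified] tens_add2 tens_id_Bplus)
qed

lemma tens_right_id_Bplus: "tens_right {#} (id_tensor_Bplus Z) = id_Bplus_unit (Z :: 'k::comm_ring_1 HH)"
  by (rule linear_eq_on_basis[OF linear_comp[OF tens_right_linear id_tensor_Bplus_linear] id_Bplus_unit_linear]) auto

text \<open>Coassociativity \<open>(Delta \<otimes> id) \<circ> Delta = (id \<otimes> Delta) \<circ> Delta\<close>: both sides are
  algebra morphisms, and on a tree it follows from the recursion for \<open>Delta\<close>.\<close>
lemma coassoc: "reassoc (tmap Delta (\<lambda>x. x) (Delta x)) = tmap (\<lambda>x. x) Delta (Delta (x :: 'k::comm_ring_1 H))"
proof -
  let ?L = "\<lambda>x :: 'k H. reassoc (tmap Delta (\<lambda>x. x) (Delta x))"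
  let ?R = "\<lambda>x :: 'k H. tmap (\<lambda>x. x) Delta (Delta x)"
  have mL: "mult_map ?L"
    by (intro mult_map_comp[OF reassoc_mult] mult_map_comp[OF tmap_mult_map] Delta_mult mult_map_id)
  have mR: "mult_map ?R"
    by (intro mult_map_comp[OF tmap_mult_map] Delta_mult mult_map_id)
  have "?L = ?R"
  proof (rule mult_map_eq_trees[OF mL mR])
    fix T show "?L (bas {#T#}) = ?R (bas {#T#})"
    proof (induction T)
      case (Node ts)
      define X :: "'k HH" where "X = Delta (bas ts)"
      have IH: "reassoc (tmap Delta (\<lambda>x. x) X) = tmap (\<lambda>x. x) Delta X"
        unfolding X_def by (rule mult_map_eq_forest[OF mL mR]) (use Node in auto)
      have DT: "Delta (bas {#Node ts#}) = bas ({#Node ts#}, {#}) + id_tensor_Bplus X"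
        unfolding X_def by (rule Delta_tree)
      have "?L (bas {#Node ts#}) = reassoc (tens (Delta (bas {#Node ts#})) 1) + reassoc (tmap Delta (\<lambda>x. x) (id_tensor_Bplus X))"
        by (simp only: DT linear_add[OF tmap_linear] linear_add[OF reassoc_linear] tmap_bas) simp
      also have "\<dots> = bas ({#Node ts#}, {#}, {#}) + id_Bplus_unit X + id_id_Bplus (tmap (\<lambda>x. x) Delta X)"
        by (simp add: reassoc_tens_one DT linear_add[OF tens_right_linear] tens_right_id_Bplus Delta_id_id_Bplus IH del: Delta_bas)
      also have "\<dots> = ?R (bas {#Node ts#})"
        by (simp add: DT linear_add[OF tmap_linear] Delta_id_Bplus tens_bas_one zero_prod_def add.assoc del: Delta_bas)
      finally show ?case .
    qed
  qed
  then show ?thesis by metis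
qed

section \<open>\<open>theta \<alpha>\<close> is a bialgebra endomorphism\<close>

definition id_id_dual :: "'k::comm_ring_1 dual \<Rightarrow> 'k H3 \<Rightarrow> 'k HH" where
  "id_id_dual \<alpha> = linext (\<lambda>(a, (b, c)). Poly_Mapping.single (a, b) (\<alpha> c))"

lemma id_id_dual_linear: "is_linear (id_id_dual \<alpha>)"
  unfolding id_id_dual_def by (rule is_linear_linext)
lemma id_id_dual_bas [simp]: "id_id_dual \<alpha> (bas (a, (b, c))) = Poly_Mapping.single (a, b) (\<alpha> c)"
  by (simp add: id_id_dual_def)

lemma id_id_dual_tens_right: "id_id_dual \<alpha> (tens_right c Y) = Poly_Mapping.single 0 (\<alpha> c) * Y"
  by (rule linear_eq_on_basis[OF linear_comp[OF id_id_dual_linear tens_right_linear] linear_mult_left[OF linear_id]])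
     (auto simp: mult_single)

lemma Delta_id_tensor_dual: "Delta (id_tensor_dual \<alpha> z) = id_id_dual \<alpha> (reassoc (tmap Delta (\<lambda>x. x) z))"
proof (rule linear_eq_on_basis[of _ _ z])
  show "is_linear (\<lambda>z. Delta (id_tensor_dual \<alpha> z))"
    by (rule linear_comp[OF Delta_linear id_tensor_dual_linear])
  show "is_linear (\<lambda>z. id_id_dual \<alpha> (reassoc (tmap Delta (\<lambda>x. x) z)))"
    by (rule linear_comp[OF id_id_dual_linear linear_comp[OF reassoc_linear tmap_linear]])
  show "Delta (id_tensor_dual \<alpha> (bas p)) = id_id_dual \<alpha> (reassoc (tmap Delta (\<lambda>x. x) (bas p)))" for p
    by (cases p) (simp add: Delta_single reassoc_tens id_id_dual_tens_right)
qed

lemma tmap_id_tensor_dual_Delta: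
  "tmap (\<lambda>x. x) (\<lambda>x. id_tensor_dual \<alpha> (Delta x)) z = id_id_dual \<alpha> (tmap (\<lambda>x. x) Delta z)"
proof -
  have tens_id_tensor_dual: "tens (bas a) (id_tensor_dual \<alpha> Y) = id_id_dual \<alpha> (tens (bas a) Y)" for a Y
    by (rule linear_eq_on_basis[OF linear_comp[OF tens_linear2 id_tensor_dual_linear]
          linear_comp[OF id_id_dual_linear tens_linear2]]) (auto simp: tens_single)
  show ?thesis
    by (rule linear_eq_on_basis[OF tmap_linear linear_comp[OF id_id_dual_linear tmap_linear]])
       (auto simp: tens_id_tensor_dual simp del: Delta_bas)
qed

text \<open>\<open>delta \<alpha>\<close> is a 1-cocycle:
  \<open>Delta \<circ> delta \<alpha> = delta \<alpha> \<otimes> 1 + (id \<otimes> delta \<alpha>) \<circ> Delta\<close>; this is where coassociativity is used.\<close>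
lemma delta_cocycle: "Delta (delta \<alpha> x) = tens (delta \<alpha> x) 1 + tmap (\<lambda>x. x) (delta \<alpha>) (Delta x)"
proof -
  have lin: "is_linear (\<lambda>x. id_tensor_dual \<alpha> (Delta x))"
    by (rule linear_comp[OF id_tensor_dual_linear Delta_linear])
  have Delta_unit: "Delta (unit_dual \<alpha> x) = tens (unit_dual \<alpha> x) 1"
    by (simp add: unit_dual_dapply Delta_single tens_single_one zero_prod_def cop_forest_def)
  have tmap_unit: "tmap (\<lambda>x. x) (unit_dual \<alpha>) z = tens (id_tensor_dual \<alpha> z) 1" for z
    by (rule linear_eq_on_basis[OF tmap_linear linear_comp[OF tens_linear1 id_tensor_dual_linear]])
       (auto simp: unit_dual_def tens_single tens_single_one)
  have delta_fun: "delta \<alpha> = (\<lambda>x. id_tensor_dual \<alpha> (Delta x) - unit_dual \<alpha> x)"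
    by (rule ext) (simp add: delta_unfold)
  have "Delta (delta \<alpha> x) = tmap (\<lambda>x. x) (\<lambda>x. id_tensor_dual \<alpha> (Delta x)) (Delta x) - tens (unit_dual \<alpha> x) 1"
    by (simp add: delta_unfold linear_diff[OF Delta_linear] Delta_id_tensor_dual coassoc
        tmap_id_tensor_dual_Delta Delta_unit)
  also have "\<dots> = tens (delta \<alpha> x) 1 + tmap (\<lambda>x. x) (delta \<alpha>) (Delta x)"
    unfolding delta_fun tmap_id_diff[OF lin unit_dual_linear] tmap_unit by (simp add: tens_diff1)
  finally show ?thesis .
qed

text \<open>\<open>B_+\<close> is a 1-cocycle (this is the defining recursion of \<open>Delta\<close>).\<close>
lemma Bplus_cocycle: "Delta (Bplus y) = tens (Bplus y) 1 + tmap (\<lambda>x. x) Bplus (Delta y)"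
  by (rule linear_eq_on_basis[OF linear_comp[OF Delta_linear Bplus_linear]
        linear_plus[OF linear_comp[OF tens_linear1 Bplus_linear] linear_comp[OF tmap_linear Delta_linear]]])
     (simp add: Delta_tree tens_bas_one id_tensor_Bplus_tmap zero_prod_def del: Delta_bas)

lemma Bplus_delta_cocycle:
  "Delta (Bplus_delta \<alpha> y) = tens (Bplus_delta \<alpha> y) 1 + tmap (\<lambda>x. x) (Bplus_delta \<alpha>) (Delta y)"
  unfolding Bplus_delta_def[abs_def]
  by (simp add: linear_add[OF Delta_linear] Bplus_cocycle delta_cocycle tens_add1
      tmap_id_add[OF Bplus_linear delta_linear])

text \<open>\<open>phi\<close> of a 1-cocycle is compatible with the coproduct; checked on trees by induction.\<close>
lemma theta_Delta: "Delta (theta \<alpha> x) = tmap (theta \<alpha>) (theta \<alpha>) (Delta (x :: 'k::comm_ring_1 H))"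
proof -
  have m1: "mult_map (\<lambda>x. Delta (theta \<alpha> x))" by (rule mult_map_comp[OF Delta_mult theta_mult])
  have m2: "mult_map (\<lambda>x. tmap (theta \<alpha>) (theta \<alpha>) (Delta x))"
    by (rule mult_map_comp[OF tmap_mult_map[OF theta_mult theta_mult] Delta_mult])
  have theta_Bplus_fun: "(\<lambda>x. theta \<alpha> (Bplus x)) = (\<lambda>x. Bplus_delta \<alpha> (theta \<alpha> x))"
    by (rule ext) (rule theta_Bplus)
  have "(\<lambda>x. Delta (theta \<alpha> x)) = (\<lambda>x. tmap (theta \<alpha>) (theta \<alpha>) (Delta x))"
  proof (rule mult_map_eq_trees[OF m1 m2])
    fix T show "Delta (theta \<alpha> (bas {#T#})) = tmap (theta \<alpha>) (theta \<alpha>) (Delta (bas {#T#} :: 'k H))"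
    proof (induction T)
      case (Node ts)
      have IH: "Delta (theta \<alpha> (bas ts)) = tmap (theta \<alpha>) (theta \<alpha>) (Delta (bas ts :: 'k H))"
        using mult_map_eq_forest[OF m1 m2, of ts] Node by simp
      have "Delta (theta \<alpha> (bas {#Node ts#})) = Delta (Bplus_delta \<alpha> (theta \<alpha> (bas ts)))"
        using theta_Bplus[of \<alpha> "bas ts"] by simp
      also have "\<dots> = tens (theta \<alpha> (bas {#Node ts#})) 1 + tmap (theta \<alpha>) (\<lambda>x. Bplus_delta \<alpha> (theta \<alpha> x)) (Delta (bas ts))"
        unfolding Bplus_delta_cocycle IH
        by (simp add: tmap_comp[OF linear_id Bplus_delta_linear] flip: theta_Bplus)
      also have "\<dots> = tmap (theta \<alpha>) (theta \<alpha>) (Delta (bas {#Node ts#}))"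
        by (simp add: Delta_tree linear_add[OF tmap_linear] id_tensor_Bplus_tmap tmap_comp[OF theta_linear theta_linear]
             mult_map_one[OF theta_mult] tens_bas_one zero_prod_def flip: theta_Bplus_fun del: Delta_bas)
      finally show ?case .
    qed
  qed
  then show ?thesis by metis
qed

section \<open>Compatibility with the counit\<close>

definition deg0_part :: "'k::comm_ring_1 H \<Rightarrow> 'k H" where
  "deg0_part z = Poly_Mapping.single {#} (lk z {#})"

lemma deg0_part_linear: "is_linear deg0_part"
  unfolding is_linear_def deg0_part_def by (simp add: lookup_add single_add lookup_map_mult map_mult_single)

lemma deg0_part_mult: "mult_map deg0_part"
proof (rule mult_mapI[OF deg0_part_linear])
  show "deg0_part (bas 0) = 1" by (simp add: deg0_part_def)
  show "deg0_part (bas (a + b)) = deg0_part (bas a) * deg0_part (bas b)" for a b :: forest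
    by (auto simp: deg0_part_def lookup_single when_def mult_single)
qed

lemma deg0_part_Bplus: "deg0_part (Bplus x) = 0"
  by (rule linear_eq_on_basis[OF linear_comp[OF deg0_part_linear Bplus_linear] linear_const0])
     (simp add: deg0_part_def lookup_single)

definition counit_tensor_id :: "'k::comm_ring_1 HH \<Rightarrow> 'k H" where
  "counit_tensor_id = linext (\<lambda>p. if fst p = {#} then bas (snd p) else 0)"

lemma counit_tensor_id_linear: "is_linear counit_tensor_id"
  unfolding counit_tensor_id_def by (rule is_linear_linext)
lemma counit_tensor_id_bas [simp]: "counit_tensor_id (bas p) = (if fst p = {#} then bas (snd p) else 0)"
  by (simp add: counit_tensor_id_def)

lemma counit_tensor_id_mult: "mult_map counit_tensor_id"
proof (rule mult_mapI[OF counit_tensor_id_linear])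
  show "counit_tensor_id (bas 0) = 1" by (simp add: zero_prod_def)
  show "counit_tensor_id (bas (a + b)) = counit_tensor_id (bas a) * counit_tensor_id (bas b)" for a b :: "forest \<times> forest"
    by (auto simp: mult_single)
qed

lemma counit_tensor_id_Bplus: "counit_tensor_id (id_tensor_Bplus Z) = Bplus (counit_tensor_id Z)"
  by (rule linear_eq_on_basis[OF linear_comp[OF counit_tensor_id_linear id_tensor_Bplus_linear]
        linear_comp[OF Bplus_linear counit_tensor_id_linear]])
     (auto simp: linear_0[OF Bplus_linear])

lemma counit_left: "counit_tensor_id (Delta x) = (x :: 'k::comm_ring_1 H)"
proof -
  have m: "mult_map (\<lambda>x::'k H. counit_tensor_id (Delta x))"
    by (rule mult_map_comp[OF counit_tensor_id_mult Delta_mult])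
  have "(\<lambda>x::'k H. counit_tensor_id (Delta x)) = (\<lambda>x. x)"
  proof (rule mult_map_eq_trees[OF m mult_map_id])
    fix T show "counit_tensor_id (Delta (bas {#T#} :: 'k H)) = bas {#T#}"
    proof (induction T)
      case (Node ts)
      have IH: "counit_tensor_id (Delta (bas ts :: 'k H)) = bas ts"
        using mult_map_eq_forest[OF m mult_map_id, of ts] Node by simp
      show ?case
        by (simp add: Delta_tree linear_add[OF counit_tensor_id_linear] counit_tensor_id_Bplus IH del: Delta_bas)
    qed
  qed
  then show ?thesis by metis
qed

lemma deg0_part_id_tensor_dual: "deg0_part (id_tensor_dual \<alpha> z) = unit_dual \<alpha> (counit_tensor_id z)"
  by (rule linear_eq_on_basis[OF linear_comp[OF deg0_part_linear id_tensor_dual_linear]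
        linear_comp[OF unit_dual_linear counit_tensor_id_linear]])
     (auto simp: deg0_part_def unit_dual_def lookup_single linear_0[OF unit_dual_linear])

lemma deg0_part_delta: "deg0_part (delta \<alpha> y) = 0"
proof -
  have "deg0_part (unit_dual \<alpha> y) = unit_dual \<alpha> y"
    by (simp add: deg0_part_def unit_dual_dapply)
  then show ?thesis
    by (simp add: delta_unfold linear_diff[OF deg0_part_linear] deg0_part_id_tensor_dual counit_left)
qed

lemma counit_theta: "counit (theta \<alpha> x) = counit (x :: 'k::comm_ring_1 H)"
proof -
  have m: "mult_map (\<lambda>x::'k H. deg0_part (theta \<alpha> x))"
    by (rule mult_map_comp[OF deg0_part_mult theta_mult])
  have "(\<lambda>x::'k H. deg0_part (theta \<alpha> x)) = deg0_part"
  proof (rule mult_map_eq_trees[OF m deg0_part_mult])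
    fix T :: rtree
    obtain ts where T: "T = Node ts" by (cases T)
    have "deg0_part (theta \<alpha> (bas {#T#} :: 'k H)) = deg0_part (Bplus_delta \<alpha> (theta \<alpha> (bas ts)))"
      using theta_Bplus[of \<alpha> "bas ts"] by (simp add: T)
    also have "\<dots> = 0"
      by (simp add: Bplus_delta_def linear_add[OF deg0_part_linear] deg0_part_Bplus deg0_part_delta)
    also have "\<dots> = deg0_part (bas {#T#})"
      by (simp add: deg0_part_def T lookup_single)
    finally show "deg0_part (theta \<alpha> (bas {#T#} :: 'k H)) = deg0_part (bas {#T#})" .
  qed
  then have "deg0_part (theta \<alpha> x) = deg0_part x" by metis
  then show ?thesis
    by (metis counit_def deg0_part_def lookup_single_eq)
qed

section \<open>The composition law and the inverse of \<open>theta \<alpha>\<close>\<close>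

lemma dapply_dcomp: "is_linear f \<Longrightarrow> dapply (dcomp \<beta> f) x = dapply \<beta> (f x)"
proof -
  assume f: "is_linear f"
  have "unit_dual (dcomp \<beta> f) x = unit_dual \<beta> (f x)"
    by (rule linear_eq_on_basis[OF unit_dual_linear linear_comp[OF unit_dual_linear f]])
       (simp add: dcomp_def fr_bas unit_dual_dapply)
  then show ?thesis by (simp add: dapply_unit_dual)
qed

lemma dcomp_dcomp: "is_linear g \<Longrightarrow> dcomp (dcomp \<beta> g) f = dcomp \<beta> (\<lambda>x. g (f x))"
  using dapply_dcomp[of g \<beta>] by (intro ext) (simp add: dcomp_def)

lemma dcomp_id: "dcomp \<beta> (\<lambda>x. x) = \<beta>"
  by (rule ext) (simp add: dcomp_def fr_bas)

lemma dcomp_neg: "dcomp (\<lambda>w. - \<alpha> w) f = (\<lambda>w. - dcomp \<alpha> f w)"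
  by (rule ext) (simp add: dcomp_def dapply_def sum_negf)

lemma id_tensor_dual_tens: fixes \<beta> :: "'k::comm_ring_1 dual"
  shows "id_tensor_dual \<beta> (tens X Y) = Poly_Mapping.single 0 (dapply \<beta> Y) * X"
proof (rule bilinear_eqI[where F="\<lambda>X Y. id_tensor_dual \<beta> (tens X Y)"])
  show "is_linear (\<lambda>X. id_tensor_dual \<beta> (tens X Y))" for Y
    by (rule linear_comp[OF id_tensor_dual_linear tens_linear1])
  show "is_linear (\<lambda>Y. id_tensor_dual \<beta> (tens X Y))" for X
    by (rule linear_comp[OF id_tensor_dual_linear tens_linear2])
  show "is_linear (\<lambda>X::'k H. Poly_Mapping.single 0 (dapply \<beta> Y) * X)" for Y
    by (rule linear_mult_left[OF linear_id])
  show "is_linear (\<lambda>Y. Poly_Mapping.single 0 (dapply \<beta> Y) * X)" for X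
    by (simp add: linear_ring_iff dapply_add dapply_smul single_add distrib_right mult.assoc[symmetric] mult_single)
qed (simp add: mult_single)

text \<open>The key identity \<open>theta \<alpha> \<circ> delta (\<beta> \<circ> theta \<alpha>) = delta \<beta> \<circ> theta \<alpha>\<close>, a consequence of
  \<open>theta \<alpha>\<close> being a unital coalgebra morphism.\<close>
lemma theta_delta: "theta \<alpha> (delta (dcomp \<beta> (theta \<alpha>)) x) = delta \<beta> (theta \<alpha> x)"
proof -
  have id_part: "theta \<alpha> (id_tensor_dual (dcomp \<beta> (theta \<alpha>)) z) = id_tensor_dual \<beta> (tmap (theta \<alpha>) (theta \<alpha>) z)" for z
  proof (rule linear_eq_on_basis[OF linear_comp[OF theta_linear id_tensor_dual_linear]
        linear_comp[OF id_tensor_dual_linear tmap_linear]])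
    fix p :: "forest \<times> forest"
    obtain a b where p: "p = (a, b)" by (cases p)
    have "theta \<alpha> (Poly_Mapping.single a (dcomp \<beta> (theta \<alpha>) b)) = Poly_Mapping.single 0 (dcomp \<beta> (theta \<alpha>) b) * theta \<alpha> (bas a)"
      by (rule linear_single[OF theta_linear])
    then show "theta \<alpha> (id_tensor_dual (dcomp \<beta> (theta \<alpha>)) (bas p)) = id_tensor_dual \<beta> (tmap (theta \<alpha>) (theta \<alpha>) (bas p))"
      by (simp add: p id_tensor_dual_tens dcomp_def fr_bas)
  qed
  have unit_part: "theta \<alpha> (unit_dual \<gamma> y) = unit_dual \<gamma> y" for \<gamma> y
    using linear_single[OF theta_linear, where a="{#}" and c="dapply \<gamma> y"]
    by (simp add: unit_dual_dapply mult_map_one[OF theta_mult] flip: single_as_smul)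
  have "unit_dual (dcomp \<beta> (theta \<alpha>)) x = unit_dual \<beta> (theta \<alpha> x)"
    by (simp add: unit_dual_dapply dapply_dcomp[OF theta_linear])
  then show ?thesis
    by (simp add: delta_unfold linear_diff[OF theta_linear] id_part unit_part flip: theta_Delta)
qed

text \<open>Hence \<open>theta \<alpha> \<circ> theta (\<beta> \<circ> theta \<alpha>)\<close> satisfies the defining property of
  \<open>theta (\<alpha> + \<beta>)\<close>, and the two coincide by uniqueness of \<open>phi\<close>.\<close>
lemma theta_comp: "theta \<alpha> (theta (dcomp \<beta> (theta \<alpha>)) x) = theta (\<lambda>w. \<alpha> w + \<beta> w) (x :: 'k::comm_ring_1 H)"
proof -
  let ?g = "dcomp \<beta> (theta \<alpha>)"
  have "(\<lambda>x. theta \<alpha> (theta ?g x)) = phi (Bplus_delta (\<lambda>w. \<alpha> w + \<beta> w))"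
  proof (rule phi_unique)
    show "mult_map (\<lambda>x. theta \<alpha> (theta ?g x))" by (rule mult_map_comp[OF theta_mult theta_mult])
    show "theta \<alpha> (theta ?g (Bplus x)) = Bplus_delta (\<lambda>w. \<alpha> w + \<beta> w) (theta \<alpha> (theta ?g x))" for x :: "'k H"
      by (simp add: theta_Bplus Bplus_delta_def linear_add[OF theta_linear] theta_delta delta_plus add.assoc)
  qed
  then show ?thesis unfolding theta_phi by metis
qed

lemma theta_zero: "theta (\<lambda>w. 0) = (\<lambda>x::'k::comm_ring_1 H. x)"
proof -
  have "Bplus_delta (\<lambda>w. 0) = (Bplus :: 'k H \<Rightarrow> 'k H)"
    by (rule ext) (simp add: Bplus_delta_def delta_zero)
  then show ?thesis by (simp add: theta_phi phi_Bplus_id)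
qed

definition bullet_inv :: "'k::comm_ring_1 dual \<Rightarrow> 'k dual" where
  "bullet_inv \<alpha> = (\<lambda>w. - dcomp \<alpha> (theta \<alpha>) w)"

lemma theta_right_inv: "theta \<alpha> (theta (bullet_inv \<alpha>) x) = (x :: 'k::comm_ring_1 H)"
  using theta_comp[of \<alpha> "\<lambda>w. - \<alpha> w" x] by (simp add: bullet_inv_def dcomp_neg theta_zero)

text \<open>Every \<open>theta \<alpha>\<close> has a right inverse of the same form, so it is also a left inverse.\<close>
lemma theta_left_inv: "theta (bullet_inv \<alpha>) (theta \<alpha> x) = (x :: 'k::comm_ring_1 H)"
proof -
  have "theta \<alpha> y = theta (bullet_inv (bullet_inv \<alpha>)) y" for y :: "'k H"
    using arg_cong[OF theta_right_inv[of "bullet_inv \<alpha>" y], of "theta \<alpha>"] theta_right_inv[of \<alpha>] by simp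
  then have "theta \<alpha> = theta (bullet_inv (bullet_inv \<alpha>))" by (rule ext)
  then show ?thesis using theta_right_inv[of "bullet_inv \<alpha>" x] by simp
qed

lemma theta_bij: "bij (theta \<alpha> :: 'k::comm_ring_1 H \<Rightarrow> 'k H)"
  by (rule o_bij[of "theta (bullet_inv \<alpha>)"]) (auto simp: theta_left_inv theta_right_inv)

lemma theta_inv: "inv_into UNIV (theta \<alpha>) = theta (bullet_inv \<alpha> :: 'k::comm_ring_1 dual)"
  by (rule ext) (metis UNIV_I bij_betw_imp_inj_on inv_into_f_f theta_bij theta_right_inv)

lemma theta_comp_general:
  "theta \<alpha> \<circ> theta \<beta> = theta (\<lambda>w. \<alpha> w + dcomp \<beta> (inv_into UNIV (theta \<alpha>)) w :: 'k::comm_ring_1)"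
proof -
  let ?\<beta>' = "dcomp \<beta> (theta (bullet_inv \<alpha>))"
  have "dcomp ?\<beta>' (theta \<alpha>) = \<beta>"
    by (simp add: dcomp_dcomp[OF theta_linear] theta_left_inv dcomp_id)
  then show ?thesis
    using theta_comp[of \<alpha> ?\<beta>'] by (auto simp: theta_inv)
qed

section \<open>Injectivity of \<open>delta\<close> and \<open>theta\<close>\<close>

lemma mult_bas_linext: "bas a * y = linext (\<lambda>p. bas (a + p)) (y :: 'k::comm_ring_1 H)"
  by (rule linear_eq_on_basis[OF linear_mult_left[OF linear_id] is_linear_linext]) (simp add: mult_single)

lemma lookup_mult_bas: "lk (bas a * y) (a + k) = lk (y :: 'k::comm_ring_1 H) k"
proof -
  have "lk (bas a * y) (a + k) = (\<Sum>p\<in>ks y. if p = k then lk y p else 0)"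
    unfolding mult_bas_linext linext_def
    by (simp add: lookup_sum lookup_map_mult lookup_single when_def)
  also have "\<dots> = lk y k" by (simp add: in_keys_iff)
  finally show ?thesis .
qed

lemma keys_id_tensor_dual: "ks (id_tensor_dual \<alpha> z) \<subseteq> fst ` ks z"
proof -
  have "ks (id_tensor_dual \<alpha> z) \<subseteq> (\<Union>p\<in>ks z. ks ((\<lambda>(a, b). Poly_Mapping.single a (\<alpha> b)) p))"
    unfolding id_tensor_dual_def by (rule keys_linext)
  also have "\<dots> \<subseteq> fst ` ks z" by (force split: prod.splits if_splits)
  finally show ?thesis .
qed

lemma keys_id_tensor_Bplus: "ks (id_tensor_Bplus (Z :: 'k::comm_ring_1 HH)) \<subseteq> (\<lambda>p. (fst p, {#Node (snd p)#})) ` ks Z"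
proof -
  have "ks (id_tensor_Bplus Z) \<subseteq> (\<Union>p\<in>ks Z. ks ((\<lambda>(a, b). bas (a, {#Node b#}) :: 'k HH) p))"
    unfolding id_tensor_Bplus_def by (rule keys_linext)
  also have "\<dots> \<subseteq> (\<lambda>p. (fst p, {#Node (snd p)#})) ` ks Z" by (force split: prod.splits)
  finally show ?thesis .
qed

lemma id_tensor_dual_mult_left: "id_tensor_dual \<alpha> (bas (a, {#}) * Z) = bas a * id_tensor_dual \<alpha> Z"
proof (rule linear_eq_on_basis[of _ _ Z])
  show "is_linear (\<lambda>Z. id_tensor_dual \<alpha> (bas (a, {#}) * Z))"
    by (rule linear_comp[OF id_tensor_dual_linear linear_mult_left[OF linear_id]])
  show "is_linear (\<lambda>Z. bas a * id_tensor_dual \<alpha> Z)"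
    by (rule linear_mult_left[OF id_tensor_dual_linear])
  show "id_tensor_dual \<alpha> (bas (a, {#}) * bas p) = bas a * id_tensor_dual \<alpha> (bas p)" for p
    by (cases p) (simp add: mult_single)
qed

text \<open>In \<open>(id \<otimes> B_+)(Delta w) \<cdot> Delta w\<close> every left factor has at most \<open>|w|\<close> nodes, so
  the tree \<open>B_+(w)\<close> never occurs on the left.\<close>
lemma no_grafted_tree_left:
  "lk (id_tensor_dual \<alpha> (id_tensor_Bplus (cop_forest w) * cop_forest w)) {#Node w#} = (0 :: 'k::comm_ring_1)"
proof (rule ccontr)
  let ?Z = "cop_forest w :: 'k HH"
  assume "lk (id_tensor_dual \<alpha> (id_tensor_Bplus ?Z * ?Z)) {#Node w#} \<noteq> 0"
  then have "{#Node w#} \<in> ks (id_tensor_dual \<alpha> (id_tensor_Bplus ?Z * ?Z))"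
    by (simp add: in_keys_iff)
  then obtain r where r: "r \<in> ks (id_tensor_Bplus ?Z * ?Z)" "fst r = {#Node w#}"
    using keys_id_tensor_dual[of \<alpha> "id_tensor_Bplus ?Z * ?Z"] by force
  then obtain p q where pq: "p \<in> ks (id_tensor_Bplus ?Z)" "q \<in> ks ?Z" "r = p + q"
    using keys_mult[of "id_tensor_Bplus ?Z" ?Z] by blast
  obtain p' where p': "p' \<in> ks ?Z" "fst p = fst p'"
    using pq(1) keys_id_tensor_Bplus[of ?Z] by force
  have small: "fsize (fst x) \<le> fsize w" if "x \<in> ks ?Z" for x
    using grad_cop_forest[of w] that unfolding grad_def by fastforce
  have "Node w \<in># fst p + fst q" using r pq by simp
  then have "tsize (Node w) \<le> fsize w"
    using tsize_le_fsize small p' pq(2) by (metis le_trans union_iff)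
  then show False by simp
qed

text \<open>\<open>\<alpha>\<close> can be read off \<open>delta \<alpha>\<close>: the coefficient of the tree \<open>B_+(w)\<close> in
  \<open>delta \<alpha> (B_+(w) \<cdot> w)\<close> is \<open>\<alpha>(w)\<close>; it comes from the term \<open>B_+(w) \<otimes> w\<close> of the coproduct,
  all other terms having a first factor without a tree of that size.\<close>
lemma delta_coefficient: "lk (delta \<alpha> (bas (add_mset (Node w) w))) {#Node w#} = (\<alpha> w :: 'k::comm_ring_1)"
proof -
  define Z :: "'k HH" where "Z = cop_forest w"
  have D: "Delta (bas (add_mset (Node w) w) :: 'k H) = bas ({#Node w#}, {#}) * Z + id_tensor_Bplus Z * Z"
  proof -
    have "cop_forest (add_mset (Node w) w) = (bas ({#Node w#}, {#}) + id_tensor_Bplus Z) * Z"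
      by (simp add: Z_def cop_forest_def cop_tree.simps)
    then show ?thesis by (simp add: distrib_right)
  qed
  have main_term: "lk (bas {#Node w#} * id_tensor_dual \<alpha> Z) {#Node w#} = \<alpha> w"
  proof -
    have "lk (bas {#Node w#} * id_tensor_dual \<alpha> Z) ({#Node w#} + {#}) = lk (id_tensor_dual \<alpha> Z) {#}"
      by (rule lookup_mult_bas)
    also have "\<dots> = lk (deg0_part (id_tensor_dual \<alpha> Z)) {#}" by (simp add: deg0_part_def)
    also have "\<dots> = \<alpha> w"
      using counit_left[of "bas w :: 'k H"] by (simp add: deg0_part_id_tensor_dual Z_def unit_dual_dapply)
    finally show ?thesis by simp
  qed
  have other_terms: "lk (id_tensor_dual \<alpha> (id_tensor_Bplus Z * Z)) {#Node w#} = 0"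
    unfolding Z_def by (rule no_grafted_tree_left)
  have "lk (delta \<alpha> (bas (add_mset (Node w) w))) {#Node w#}
      = lk (bas {#Node w#} * id_tensor_dual \<alpha> Z) {#Node w#} + lk (id_tensor_dual \<alpha> (id_tensor_Bplus Z * Z)) {#Node w#}
        - lk (unit_dual \<alpha> (bas (add_mset (Node w) w))) {#Node w#}"
    by (simp add: delta_unfold D linear_add[OF id_tensor_dual_linear] id_tensor_dual_mult_left lookup_add lookup_minus
        del: Delta_bas)
  also have "\<dots> = \<alpha> w" using main_term other_terms by (simp add: unit_dual_dapply lookup_single)
  finally show ?thesis .
qed

lemma delta_inj: "inj (delta :: 'k::comm_ring_1 dual \<Rightarrow> 'k H \<Rightarrow> 'k H)"
proof (rule injI)
  fix \<alpha> \<beta> :: "'k dual"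
  assume "delta \<alpha> = delta \<beta>"
  then show "\<alpha> = \<beta>" using delta_coefficient[of \<alpha>] delta_coefficient[of \<beta>] by (metis ext)
qed

text \<open>\<open>delta \<alpha>\<close> is recovered from \<open>theta \<alpha>\<close> as \<open>theta \<alpha> \<circ> B_+ \<circ> (theta \<alpha>)\<^sup>-\<^sup>1 - B_+\<close>.\<close>
lemma theta_inj: "inj (theta :: 'k::comm_ring_1 dual \<Rightarrow> 'k H \<Rightarrow> 'k H)"
proof (rule injI)
  fix \<alpha> \<beta> :: "'k dual"
  assume eq: "theta \<alpha> = theta \<beta>"
  have "delta \<alpha> (theta \<alpha> x) = delta \<beta> (theta \<alpha> x)" for x
    using theta_Bplus[of \<alpha> x] theta_Bplus[of \<beta> x] eq by (simp add: Bplus_delta_def)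
  then have "delta \<alpha> = delta \<beta>"
    using theta_right_inv[of \<alpha>] by (metis ext)
  then show "\<alpha> = \<beta>" using delta_inj by (metis injD)
qed

section \<open>The groups \<open>Aut_Hopf(H_R)\<close> and \<open>(H_R', \<bullet>)\<close>\<close>

lemma theta_hopf_aut: "hopf_aut (theta \<alpha> :: 'k::comm_ring_1 H \<Rightarrow> 'k H)"
  unfolding hopf_aut_def hopf_endo_def tensor_map_tmap
  using theta_linear[of \<alpha>] mult_map_one[OF theta_mult[of \<alpha>]] mult_map_mult[OF theta_mult[of \<alpha>]]
    theta_Delta[of \<alpha>] counit_theta[of \<alpha>] theta_bij[of \<alpha>] by blast

lemma hopf_aut_comp:
  assumes f: "hopf_aut f" and g: "hopf_aut g" shows "hopf_aut (f \<circ> g)"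
proof -
  have lf: "is_linear f" using f by (simp add: hopf_aut_def hopf_endo_def)
  show ?thesis
    using f g unfolding hopf_aut_def hopf_endo_def tensor_map_tmap
    by (auto simp: linear_comp tmap_comp[OF lf lf] bij_comp[of g f, unfolded o_def] o_def)
qed

lemma hopf_aut_id: "hopf_aut (id :: 'k::comm_ring_1 H \<Rightarrow> 'k H)"
  unfolding hopf_aut_def hopf_endo_def tensor_map_tmap id_def
  by (simp add: linear_id tmap_id bij_id[unfolded id_def])

lemma hopf_aut_inv:
  assumes f: "hopf_aut (f :: 'k::comm_ring_1 H \<Rightarrow> 'k H)"
  shows "hopf_aut (inv_into UNIV f)"
proof -
  let ?g = "inv_into UNIV f"
  have b: "bij f" and lf: "is_linear f" and one: "f 1 = 1" and m: "\<And>x y. f (x * y) = f x * f y"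
    and D: "\<And>x. Delta (f x) = tmap f f (Delta x)" and c: "\<And>x. counit (f x) = counit x"
    using f by (auto simp: hopf_aut_def hopf_endo_def tensor_map_tmap)
  have fg: "f (?g x) = x" for x using b by (simp add: bij_is_surj surj_f_inv_f)
  have gf: "?g (f x) = x" for x using b by (simp add: bij_is_inj inv_f_f)
  have lg: "is_linear ?g"
    unfolding is_linear_def by (metis fg gf linear_add[OF lf] linear_smul[OF lf])
  have "Delta (?g x) = tmap ?g ?g (Delta x)" for x
  proof -
    have "tmap ?g ?g (Delta x) = tmap ?g ?g (tmap f f (Delta (?g x)))" by (simp add: fg flip: D)
    also have "\<dots> = Delta (?g x)" by (simp add: tmap_comp[OF lg lg] gf tmap_id)
    finally show ?thesis by simp
  qed
  moreover have "?g 1 = 1" by (metis gf one)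
  moreover have "?g (x * y) = ?g x * ?g y" for x y by (metis fg gf m)
  moreover have "counit (?g x) = counit x" for x by (metis c fg)
  moreover have "bij ?g" by (rule bij_imp_bij_inv[OF b])
  ultimately show "hopf_aut ?g"
    unfolding hopf_aut_def hopf_endo_def tensor_map_tmap using lg by blast
qed

lemma AutHopf_group: "group (AutHopf :: ('k::comm_ring_1 H \<Rightarrow> 'k H) monoid)"
proof (rule groupI)
  show "x \<in> carrier AutHopf \<Longrightarrow> \<exists>y\<in>carrier AutHopf. y \<otimes>\<^bsub>AutHopf\<^esub> x = \<one>\<^bsub>AutHopf\<^esub>" for x :: "'k H \<Rightarrow> 'k H"
    using hopf_aut_inv[of x] inv_o_cancel[OF bij_is_inj[of x]]
    by (auto simp: AutHopf_def hopf_aut_def)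
qed (auto simp: AutHopf_def hopf_aut_comp hopf_aut_id o_assoc)

lemma AutHopf_inv_theta: "inv\<^bsub>AutHopf\<^esub> (theta \<alpha>) = theta (bullet_inv \<alpha> :: 'k::comm_ring_1 dual)"
  by (rule group.inv_equality[OF AutHopf_group])
     (auto simp: AutHopf_def theta_hopf_aut o_def theta_left_inv id_def)

lemma theta_bullet: "theta (bullet \<alpha> \<beta>) = theta \<alpha> \<circ> theta (\<beta> :: 'k::comm_ring_1 dual)"
  by (simp add: bullet_def theta_comp_general)

text \<open>Since \<open>theta\<close> is injective and turns \<open>\<bullet>\<close> into composition, identities in
  \<open>(H_R', \<bullet>)\<close> can be checked after applying \<open>theta\<close>.\<close>
lemma bullet_eqI: "theta \<alpha> = theta \<beta> \<Longrightarrow> \<alpha> = (\<beta> :: 'k::comm_ring_1 dual)"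
  by (rule injD[OF theta_inj])

lemma bullet_inv_left: "bullet (bullet_inv \<alpha>) \<alpha> = (\<lambda>_. 0 :: 'k::comm_ring_1)"
  by (rule bullet_eqI) (simp add: theta_bullet theta_zero o_def theta_left_inv)

lemma dual_group: "group (dual_group :: 'k::comm_ring_1 dual monoid)"
proof (rule groupI)
  show "x \<otimes>\<^bsub>dual_group\<^esub> y \<otimes>\<^bsub>dual_group\<^esub> z = x \<otimes>\<^bsub>dual_group\<^esub> (y \<otimes>\<^bsub>dual_group\<^esub> z)" for x y z :: "'k dual"
    unfolding dual_group_def by simp (rule bullet_eqI, simp add: theta_bullet o_assoc)
  show "\<one>\<^bsub>dual_group\<^esub> \<otimes>\<^bsub>dual_group\<^esub> x = x" for x :: "'k dual"
    unfolding dual_group_def by simp (rule bullet_eqI, simp add: theta_bullet theta_zero o_def)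
  show "\<exists>y\<in>carrier dual_group. y \<otimes>\<^bsub>dual_group\<^esub> x = \<one>\<^bsub>dual_group\<^esub>" for x :: "'k dual"
    using bullet_inv_left[of x] by (auto simp: dual_group_def)
qed (simp_all add: dual_group_def)

lemma dual_group_inv: "inv\<^bsub>dual_group\<^esub> \<alpha> = bullet_inv (\<alpha> :: 'k::comm_ring_1 dual)"
  by (rule group.inv_equality[OF dual_group]) (simp_all add: dual_group_def bullet_inv_left)

lemma theta_subgroup: "subgroup (range theta) (AutHopf :: ('k::comm_ring_1 H \<Rightarrow> 'k H) monoid)"
proof (rule group.subgroupI[OF AutHopf_group])
  show "range theta \<subseteq> carrier (AutHopf :: ('k H \<Rightarrow> 'k H) monoid)"
    by (auto simp: AutHopf_def theta_hopf_aut)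
  show "a \<in> range theta \<Longrightarrow> inv\<^bsub>AutHopf\<^esub> a \<in> range theta" for a :: "'k H \<Rightarrow> 'k H"
    by (auto simp: AutHopf_inv_theta)
  show "a \<in> range theta \<Longrightarrow> b \<in> range theta \<Longrightarrow> a \<otimes>\<^bsub>AutHopf\<^esub> b \<in> range theta" for a b :: "'k H \<Rightarrow> 'k H"
    by (auto simp: AutHopf_def theta_comp_general)
qed simp

lemma theta_iso: "theta \<in> iso (dual_group :: 'k::comm_ring_1 dual monoid) ((AutHopf :: ('k H \<Rightarrow> 'k H) monoid)\<lparr>carrier := range theta\<rparr>)"
  unfolding iso_def hom_def
  by (auto simp: dual_group_def AutHopf_def theta_bullet bij_betw_def theta_inj)

theorem mainTheorem15:
  fixes \<alpha> :: "'k::field_char_0 dual"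
  shows
    \<comment> \<open>(1)\<close>
    "(\<forall>w. \<forall>v\<in>Poly_Mapping.keys (theta \<alpha> (fr w) - fr w). fsize v < fsize w)
     \<comment> \<open>(2)\<close>
     \<and> hopf_aut (theta \<alpha>)
     \<and> inv_into UNIV (theta \<alpha>) = theta (\<lambda>w. - dcomp \<alpha> (theta \<alpha>) w)
     \<and> (\<forall>\<beta>::'k dual. theta \<alpha> \<circ> theta \<beta> = theta (\<lambda>w. \<alpha> w + dcomp \<beta> (inv_into UNIV (theta \<alpha>)) w))
     \<comment> \<open>(3)\<close>
     \<and> inj (delta :: 'k dual \<Rightarrow> 'k H \<Rightarrow> 'k H)
     \<and> inj (theta :: 'k dual \<Rightarrow> 'k H \<Rightarrow> 'k H)
     \<and> group (dual_group :: 'k dual monoid)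
     \<and> inv\<^bsub>(dual_group :: 'k dual monoid)\<^esub> \<alpha> = (\<lambda>w. - dcomp \<alpha> (theta \<alpha>) w)
     \<and> group (AutHopf :: ('k H \<Rightarrow> 'k H) monoid)
     \<and> subgroup (range theta) (AutHopf :: ('k H \<Rightarrow> 'k H) monoid)
     \<and> theta \<in> iso (dual_group :: 'k dual monoid) ((AutHopf :: ('k H \<Rightarrow> 'k H) monoid)\<lparr>carrier := range theta\<rparr>)"
  using theta_unitriangular[of \<alpha>] theta_hopf_aut[of \<alpha>] theta_inv[of \<alpha>] theta_comp_general[of \<alpha>]
    delta_inj theta_inj dual_group dual_group_inv[of \<alpha>] AutHopf_group theta_subgroup theta_iso
  unfolding bullet_inv_def by blast

end
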